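(* Let $n\ge 2$, let $G$ be a subgroup of $B_n$, let $F_n\rtimes G$ denote the subgroup of $F_n\rtimes B_n$ generated by $F_n$ and $G$, and let $\rho\colon F_n\rtimes G\to\mathrm{GL}(V)$ be a representation on a finite-dimensional complex vector space $V$, extended linearly to $\mathbf{Z}[F_n\rtimes G]\to\mathrm{End}(V)$. For $\beta\in G$, every entry of $\phi(\beta)$ lies in $\mathbf{Z}[F_n\rtimes G]$, and the map $\rho^+\colon G\to\mathrm{GL}(V^{\oplus n})$ sending $\beta$ to the block matrix whose $(k,l)$ block is $\rho(\phi(\beta)_{kl})$ is a well-defined representation of $G$.
   Context: The braid group $B_n$ has generators $\sigma_1,\dots,\sigma_{n-1}$ with relations $\sigma_i\sigma_j=\sigma_j\sigma_i$ for $|i-j|>1$ and $\sigma_i\sigma_j\sigma_i=\sigma_j\sigma_i\sigma_j$ for $|i-j|=1$. Let $F_n$ be the free group on $g_1,\dots,g_n$. The semidirect product $F_n\rtimes B_n$ is the group generated by $F_n$ and $B_n$ subject to the additional relations $g_{i+1}\sigma_i=\sigma_i g_i$, $g_i\sigma_i=\sigma_i g_i g_{i+1}g_i^{-1}$, and $g_j\sigma_i=\sigma_i g_j$ for $j\notin\{i,i+1\}$. For $i=1,\dots,n-1$ let $R_i=\begin{bmatrix}0&g_i\\1&1-g_i\end{bmatrix}$ (entries in the group ring $\mathbf{Z}[F_n\rtimes B_n]$). Let $\phi$ be the homomorphism from $B_n$ to the group of invertible $n\times n$ matrices over $\mathbf{Z}[F_n\rtimes B_n]$ (usual matrix multiplication)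 given by $\phi(\sigma_i)=\sigma_i\cdot\mathrm{diag}(I_{i-1},R_i,I_{n-i-1})$, where the scalar $\sigma_i$ multiplies every entry on the left. *)

theory Defs
  imports "Jordan_Normal_Form.Matrix" "HOL-Algebra.Generated_Groups"
begin

text \<open>A letter (x, False) stands for the generator x, (x, True) for its inverse.\<close>
type_synonym 'a word = "('a \<times> bool) list"

inductive_set pres_rel :: "'a set \<Rightarrow> ('a word \<times> 'a word) set \<Rightarrow> ('a word \<times> 'a word) set"
  for A :: "'a set" and R :: "('a word \<times> 'a word) set" where
  refl: "w \<in> lists (A \<times> UNIV) \<Longrightarrow> (w, w) \<in> pres_rel A R"
| sym: "(u, v) \<in> pres_rel A R \<Longrightarrow> (v, u) \<in> pres_rel A R"
| trans: "(u, v) \<in> pres_rel A R \<Longrightarrow> (v, w) \<in> pres_rel A R \<Longrightarrow> (u, w) \<in> pres_rel A R"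
| cancel: "a \<in> A \<Longrightarrow> ([(a, b), (a, \<not> b)], []) \<in> pres_rel A R"
| rel: "(u, v) \<in> R \<Longrightarrow> u \<in> lists (A \<times> UNIV) \<Longrightarrow> v \<in> lists (A \<times> UNIV) \<Longrightarrow> (u, v) \<in> pres_rel A R"
| cong: "(u, v) \<in> pres_rel A R \<Longrightarrow> (u', v') \<in> pres_rel A R \<Longrightarrow> (u @ u', v @ v') \<in> pres_rel A R"

definition pres_group :: "'a set \<Rightarrow> ('a word \<times> 'a word) set \<Rightarrow> 'a word set monoid" where
  "pres_group A R = \<lparr> carrier = lists (A \<times> UNIV) // pres_rel A R,
     mult = (\<lambda>X Y. pres_rel A R `` {(SOME x. x \<in> X) @ (SOME y. y \<in> Y)}),
     one = pres_rel A R `` {[]} \<rparr>"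

datatype gen = g nat | s nat

definition gens :: "nat \<Rightarrow> gen set" where
  "gens n = {g i | i. 1 \<le> i \<and> i \<le> n} \<union> {s i | i. 1 \<le> i \<and> i \<le> n - 1}"

abbreviation (input) pos :: "gen \<Rightarrow> gen \<times> bool" where "pos x \<equiv> (x, False)"
abbreviation (input) neg :: "gen \<Rightarrow> gen \<times> bool" where "neg x \<equiv> (x, True)"

definition rels :: "nat \<Rightarrow> (gen word \<times> gen word) set" where
  "rels n =
     {([pos (s i), pos (s j)], [pos (s j), pos (s i)]) | i j.
         1 \<le> i \<and> i \<le> n - 1 \<and> 1 \<le> j \<and> j \<le> n - 1 \<and> (i + 1 < j \<or> j + 1 < i)}
   \<union> {([pos (s i), pos (s j), pos (s i)], [pos (s j), pos (s i), pos (s j)]) | i j.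
         1 \<le> i \<and> i \<le> n - 1 \<and> 1 \<le> j \<and> j \<le> n - 1 \<and> (i = j + 1 \<or> j = i + 1)}
   \<union> {([pos (g (i + 1)), pos (s i)], [pos (s i), pos (g i)]) | i. 1 \<le> i \<and> i \<le> n - 1}
   \<union> {([pos (g i), pos (s i)], [pos (s i), pos (g i), pos (g (i + 1)), neg (g i)]) | i.
         1 \<le> i \<and> i \<le> n - 1}
   \<union> {([pos (g j), pos (s i)], [pos (s i), pos (g j)]) | i j.
         1 \<le> i \<and> i \<le> n - 1 \<and> 1 \<le> j \<and> j \<le> n \<and> j \<noteq> i \<and> j \<noteq> i + 1}"

definition FB :: "nat \<Rightarrow> gen word set monoid" where
  "FB n = pres_group (gens n) (rels n)"

definition elem :: "nat \<Rightarrow> gen \<Rightarrow> gen word set" where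
  "elem n x = pres_rel (gens n) (rels n) `` {[pos x]}"

definition braid_sub :: "nat \<Rightarrow> gen word set set" where
  "braid_sub n = generate (FB n) {elem n (s i) | i. 1 \<le> i \<and> i \<le> n - 1}"

definition free_sub :: "nat \<Rightarrow> gen word set set" where
  "free_sub n = generate (FB n) {elem n (g i) | i. 1 \<le> i \<and> i \<le> n}"

definition FnG :: "nat \<Rightarrow> gen word set set \<Rightarrow> gen word set set" where
  "FnG n G = generate (FB n) (free_sub n \<union> G)"

type_synonym grelt = "gen word set \<Rightarrow> int"

definition gr_supp :: "grelt \<Rightarrow> gen word set set" where
  "gr_supp x = {\<gamma>. x \<gamma> \<noteq> 0}"

definition in_group_ring :: "gen word set set \<Rightarrow> grelt \<Rightarrow> bool" where
  "in_group_ring H x \<longleftrightarrow> finite (gr_supp x) \<and> gr_supp x \<subseteq> H"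

definition gr_of :: "gen word set \<Rightarrow> grelt" where
  "gr_of \<gamma> = (\<lambda>\<delta>. if \<delta> = \<gamma> then 1 else 0)"

definition gr_zero :: grelt where "gr_zero = (\<lambda>_. 0)"

definition gr_one :: "nat \<Rightarrow> grelt" where "gr_one n = gr_of (\<one>\<^bsub>FB n\<^esub>)"

definition gr_diff :: "grelt \<Rightarrow> grelt \<Rightarrow> grelt" where
  "gr_diff x y = (\<lambda>\<gamma>. x \<gamma> - y \<gamma>)"

definition gr_mult :: "nat \<Rightarrow> grelt \<Rightarrow> grelt \<Rightarrow> grelt" where
  "gr_mult n x y = (\<lambda>\<gamma>. \<Sum>(\<alpha>, \<beta>) \<in> gr_supp x \<times> gr_supp y.
      if \<alpha> \<otimes>\<^bsub>FB n\<^esub> \<beta> = \<gamma> then x \<alpha> * y \<beta> else 0)"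

section \<open>n x n matrices over Z[F_n \<rtimes> B_n] (indices 0..n-1, zero outside)\<close>

type_synonym grmat = "nat \<Rightarrow> nat \<Rightarrow> grelt"

definition gm_mult :: "nat \<Rightarrow> grmat \<Rightarrow> grmat \<Rightarrow> grmat" where
  "gm_mult n A B = (\<lambda>k l \<gamma>. \<Sum>m<n. gr_mult n (A k m) (B m l) \<gamma>)"

definition gm_one :: "nat \<Rightarrow> grmat" where
  "gm_one n = (\<lambda>k l. if k = l \<and> k < n then gr_one n else gr_zero)"

definition gm_wf :: "nat \<Rightarrow> grmat \<Rightarrow> bool" where
  "gm_wf n A \<longleftrightarrow> (\<forall>k l. in_group_ring (carrier (FB n)) (A k l))
       \<and> (\<forall>k l. (n \<le> k \<or> n \<le> l) \<longrightarrow> A k l = gr_zero)"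

text \<open>R_i = [[0, g_i], [1, 1 - g_i]] placed at rows/columns i-1, i (0-based),
  i.e. diag(I_{i-1}, R_i, I_{n-i-1}).\<close>
definition diagR :: "nat \<Rightarrow> nat \<Rightarrow> grmat" where
  "diagR n i = (\<lambda>k l.
     if n \<le> k \<or> n \<le> l then gr_zero
     else if k = i - 1 \<and> l = i - 1 then gr_zero
     else if k = i - 1 \<and> l = i then gr_of (elem n (g i))
     else if k = i \<and> l = i - 1 then gr_one n
     else if k = i \<and> l = i then gr_diff (gr_one n) (gr_of (elem n (g i)))
     else if k = l then gr_one n else gr_zero)"

text \<open>phi(sigma_i) = sigma_i \<cdot> diag(I_{i-1}, R_i, I_{n-i-1}) (sigma_i multiplying each entry on the left).\<close>
definition phi_gen :: "nat \<Rightarrow> nat \<Rightarrow> grmat" where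
  "phi_gen n i = (\<lambda>k l. gr_mult n (gr_of (elem n (s i))) (diagR n i k l))"

definition phi_gen_inv :: "nat \<Rightarrow> nat \<Rightarrow> grmat" where
  "phi_gen_inv n i = (THE M. gm_wf n M \<and> gm_mult n (phi_gen n i) M = gm_one n
                                      \<and> gm_mult n M (phi_gen n i) = gm_one n)"

fun phi_letter :: "nat \<Rightarrow> gen \<times> bool \<Rightarrow> grmat" where
  "phi_letter n (s i, False) = phi_gen n i"
| "phi_letter n (s i, True) = phi_gen_inv n i"
| "phi_letter n (g i, _) = gm_one n"

definition phi_word :: "nat \<Rightarrow> gen word \<Rightarrow> grmat" where
  "phi_word n w = foldr (\<lambda>a M. gm_mult n (phi_letter n a) M) w (gm_one n)"

definition phi :: "nat \<Rightarrow> gen word set \<Rightarrow> grmat" where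
  "phi n \<beta> = phi_word n (SOME w. w \<in> lists ({s i | i. 1 \<le> i \<and> i \<le> n - 1} \<times> UNIV)
                                  \<and> pres_rel (gens n) (rels n) `` {w} = \<beta>)"

definition is_rep :: "nat \<Rightarrow> gen word set set \<Rightarrow> nat \<Rightarrow> (gen word set \<Rightarrow> complex mat) \<Rightarrow> bool" where
  "is_rep n H d \<rho> \<longleftrightarrow>
     (\<forall>x\<in>H. \<rho> x \<in> carrier_mat d d \<and> invertible_mat (\<rho> x))
     \<and> (\<forall>x\<in>H. \<forall>y\<in>H. \<rho> (x \<otimes>\<^bsub>FB n\<^esub> y) = \<rho> x * \<rho> y)"

definition rho_lin :: "nat \<Rightarrow> (gen word set \<Rightarrow> complex mat) \<Rightarrow> grelt \<Rightarrow> complex mat" where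
  "rho_lin d \<rho> x = mat d d (\<lambda>(a, b). \<Sum>\<gamma>\<in>gr_supp x. of_int (x \<gamma>) * (\<rho> \<gamma> $$ (a, b)))"

definition rho_plus :: "nat \<Rightarrow> nat \<Rightarrow> (gen word set \<Rightarrow> complex mat) \<Rightarrow> gen word set \<Rightarrow> complex mat" where
  "rho_plus n d \<rho> \<beta> = mat (n * d) (n * d)
     (\<lambda>(a, b). rho_lin d \<rho> (phi n \<beta> (a div d) (b div d)) $$ (a mod d, b mod d))"

end

theory Submission
  imports Defs "HOL-Library.Function_Algebras"
begin

text \<open>The matrix \<open>\<phi>(\<sigma>\<^sub>i) = \<sigma>\<^sub>i \<cdot> diag(I, R\<^sub>i, I)\<close> has the explicit inverse
  \<open>diag(I, R\<^sub>i\<^sup>-\<^sup>1, I) \<cdot> \<sigma>\<^sub>i\<^sup>-\<^sup>1\<close>, and the braid relations hold for these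
  matrices because they can be checked entrywise, with the relations of \<open>F\<^sub>n \<rtimes> B\<^sub>n\<close>, on
  the few rows and columns where the matrices are not scalar. Hence \<open>\<phi>\<close>, evaluated on any
  word in the \<open>\<sigma>\<^sub>i\<^sup>\<plusminus>\<^sup>1\<close>, is well defined and multiplicative on \<open>B\<^sub>n\<close>.
  Since every \<open>\<sigma>\<^sub>i\<^sup>\<plusminus>\<^sup>1\<close> normalises \<open>F\<^sub>n\<close>, induction on such a word shows that
  each entry of \<open>\<phi>(\<beta>)\<close> is supported in the coset \<open>F\<^sub>n \<beta> \<subseteq> F\<^sub>n \<rtimes> G\<close>. On
  \<open>\<int>[F\<^sub>n \<rtimes> G]\<close> the linear extension of \<open>\<rho>\<close> is multiplicative, so \<open>\<rho>\<^sup>+\<close> is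
  multiplicative block by block and maps \<open>1\<close> to the identity.\<close>

lemma (in group) inv_mult_cancel_left:
  "x \<in> carrier G \<Longrightarrow> y \<in> carrier G \<Longrightarrow> inv x \<otimes> (x \<otimes> y) = y"
  by (simp add: m_assoc[symmetric])

lemma (in group) mult_inv_cancel_left:
  "x \<in> carrier G \<Longrightarrow> y \<in> carrier G \<Longrightarrow> x \<otimes> (inv x \<otimes> y) = y"
  by (simp add: m_assoc[symmetric])

lemma (in group) m_assoc_tail:
  "a \<otimes> b = c \<Longrightarrow> a \<in> carrier G \<Longrightarrow> b \<in> carrier G \<Longrightarrow> t \<in> carrier G \<Longrightarrow> a \<otimes> (b \<otimes> t) = c \<otimes> t"
  by (metis m_assoc)

lemma (in group) intertwine_inv:
  assumes a: "a \<in> carrier G" and x: "x \<in> carrier G" and b: "b \<in> carrier G"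
    and ax: "a \<otimes> x = x \<otimes> b"
  shows "inv a \<otimes> x = x \<otimes> inv b"
proof -
  have "inv a \<otimes> x = inv a \<otimes> ((x \<otimes> b) \<otimes> inv b)"
    using a x b by (simp add: m_assoc)
  also have "\<dots> = inv a \<otimes> ((a \<otimes> x) \<otimes> inv b)"
    by (simp only: ax)
  also have "\<dots> = x \<otimes> inv b"
    using a x b by (simp add: m_assoc[symmetric])
  finally show ?thesis .
qed

lemma (in group) conj_generate_closed:
  assumes S: "S \<subseteq> carrier G" and x: "x \<in> carrier G"
    and gens: "\<And>s. s \<in> S \<Longrightarrow> x \<otimes> s \<otimes> inv x \<in> generate G S"
    and h: "h \<in> generate G S"
  shows "x \<otimes> h \<otimes> inv x \<in> generate G S"
  using h
proof (induction rule: generate.induct)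
  case one
  then show ?case using x by (simp add: generate.one)
next
  case (incl h)
  then show ?case by (rule gens)
next
  case (inv h)
  then have "x \<otimes> inv h \<otimes> inv x = inv (x \<otimes> h \<otimes> inv x)"
    using S x by (auto simp: inv_mult_group m_assoc)
  then show ?case
    using generate_m_inv_closed[OF S gens[OF inv]] by simp
next
  case (eng h1 h2)
  then have "h1 \<in> carrier G" "h2 \<in> carrier G"
    using generate_in_carrier[OF S] by auto
  then have "x \<otimes> (h1 \<otimes> h2) \<otimes> inv x = (x \<otimes> h1 \<otimes> inv x) \<otimes> (x \<otimes> h2 \<otimes> inv x)"
    using x by (simp add: m_assoc inv_mult_cancel_left)
  then show ?case
    using generate.eng[OF eng.IH] by simp
qed

lemma (in group) r_coset_mult_conj_closed:
  assumes H: "subgroup H G" and a: "a \<in> carrier G" and b: "b \<in> carrier G"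
    and conj: "\<And>h. h \<in> H \<Longrightarrow> a \<otimes> h \<otimes> inv a \<in> H"
    and x: "x \<in> H #> a" and y: "y \<in> H #> b"
  shows "x \<otimes> y \<in> H #> (a \<otimes> b)"
proof -
  obtain h1 h2 where h: "h1 \<in> H" "h2 \<in> H" and xy: "x = h1 \<otimes> a" "y = h2 \<otimes> b"
    using x y unfolding r_coset_def by blast
  have c: "h1 \<in> carrier G" "h2 \<in> carrier G"
    using h subgroup.subset[OF H] by auto
  have "x \<otimes> y = (h1 \<otimes> (a \<otimes> h2 \<otimes> inv a)) \<otimes> (a \<otimes> b)"
    using a b c xy by (simp add: m_assoc inv_mult_cancel_left)
  moreover have "h1 \<otimes> (a \<otimes> h2 \<otimes> inv a) \<in> H"
    using h conj subgroup.m_closed[OF H] by blast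
  ultimately show ?thesis
    unfolding r_coset_def by blast
qed

lemma sum_fun_apply: "(\<Sum>i\<in>I. f i) x = (\<Sum>i\<in>I. f i x)"
  by (induction I rule: infinite_finite_induct) auto

lemma sum_lessThan_mult_blocks: "(\<Sum>e<n * d. f e) = (\<Sum>m<n. \<Sum>c<d. f (m * d + c))" for n d :: nat
proof -
  have "(\<Sum>e<n * d. f e) = (\<Sum>m<n. sum f {m * d..<m * d + d})"
    using sum.nat_group[of f d n] by simp
  also have "\<dots> = (\<Sum>m<n. \<Sum>c<d. f (m * d + c))"
  proof (rule sum.cong[OF HOL.refl])
    fix m
    have "sum f {0 + m * d..<d + m * d} = (\<Sum>c\<in>{0..<d}. f (c + m * d))"
      by (rule sum.shift_bounds_nat_ivl)
    then show "sum f {m * d..<m * d + d} = (\<Sum>c<d. f (m * d + c))"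
      by (simp add: atLeast0LessThan add.commute)
  qed
  finally show ?thesis .
qed

lemma nat_eq_iff_div_mod_eq: "a = b \<longleftrightarrow> a div d = b div d \<and> a mod d = b mod d" for a b d :: nat
  by (metis div_mult_mod_eq)

lemma index_mult_mat_sum:
  "A \<in> carrier_mat r m \<Longrightarrow> B \<in> carrier_mat m c \<Longrightarrow> i < r \<Longrightarrow> j < c \<Longrightarrow>
   (A * B) $$ (i, j) = (\<Sum>k<m. A $$ (i, k) * B $$ (k, j))"
  by (simp add: scalar_prod_def atLeast0LessThan)

lemma invertible_idempotent_mat:
  assumes M: "M \<in> carrier_mat d d" and inv: "invertible_mat M" and idem: "M * M = M"
  shows "M = 1\<^sub>m d"
proof -
  obtain B where MB: "M * B = 1\<^sub>m (dim_row M)" and BM: "B * M = 1\<^sub>m (dim_row B)"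
    using inv unfolding invertible_mat_def inverts_mat_def by blast
  have "dim_col B = d" using arg_cong[OF MB, of dim_col] M by simp
  moreover have "dim_row B = d" using arg_cong[OF BM, of dim_col] M by simp
  ultimately have B: "B \<in> carrier_mat d d" by auto
  then have BM: "B * M = 1\<^sub>m d" using BM by simp
  have "M = (B * M) * M" using BM M by simp
  also have "\<dots> = B * (M * M)" by (rule assoc_mult_mat[OF B M M])
  also have "\<dots> = 1\<^sub>m d" using BM idem by simp
  finally show ?thesis .
qed

section \<open>Groups given by presentations\<close>

definition inv_word :: "'a word \<Rightarrow> 'a word" where
  "inv_word w = rev (map (\<lambda>(a, b). (a, \<not> b)) w)"

lemma inv_word_simps [simp]:
  "inv_word [] = []"
  "inv_word (x # w) = inv_word w @ [(fst x, \<not> snd x)]"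
  "inv_word (u @ v) = inv_word v @ inv_word u"
  by (auto simp: inv_word_def case_prod_beta)

lemma inv_word_inv_word [simp]: "inv_word (inv_word w) = w"
  by (induction w) auto

lemma inv_word_in_lists [simp]: "inv_word w \<in> lists (A \<times> UNIV) \<longleftrightarrow> w \<in> lists (A \<times> UNIV)"
  by (auto simp: inv_word_def)

lemma pres_rel_in_lists:
  "(u, v) \<in> pres_rel A R \<Longrightarrow> u \<in> lists (A \<times> UNIV) \<and> v \<in> lists (A \<times> UNIV)"
  by (induction rule: pres_rel.induct) auto

lemma equiv_pres_rel: "equiv (lists (A \<times> UNIV)) (pres_rel A R)"
proof (rule equivI)
  show "pres_rel A R \<subseteq> lists (A \<times> UNIV) \<times> lists (A \<times> UNIV)"
    using pres_rel_in_lists by fast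
  show "refl_on (lists (A \<times> UNIV)) (pres_rel A R)"
    unfolding refl_on_def by (blast intro: pres_rel.refl)
  show "sym (pres_rel A R)" unfolding sym_def by (blast intro: pres_rel.sym)
  show "trans (pres_rel A R)" unfolding trans_def by (blast intro: pres_rel.trans)
qed

lemma pres_rel_append_inv_word:
  "w \<in> lists (A \<times> UNIV) \<Longrightarrow> (w @ inv_word w, []) \<in> pres_rel A R"
proof (induction w)
  case Nil
  then show ?case by (auto intro: pres_rel.refl)
next
  case (Cons x w)
  obtain a b where x: "x = (a, b)" by force
  have a: "a \<in> A" and w: "w \<in> lists (A \<times> UNIV)" using Cons.prems x by auto
  have "([(a, b)] @ (w @ inv_word w) @ [(a, \<not> b)], [(a, b)] @ [] @ [(a, \<not> b)]) \<in> pres_rel A R"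
    using a Cons.IH[OF w] by (intro pres_rel.cong pres_rel.refl) auto
  moreover have "([(a, b), (a, \<not> b)], []) \<in> pres_rel A R"
    using a by (rule pres_rel.cancel)
  ultimately show ?case
    using x by (auto intro: pres_rel.trans)
qed

lemma pres_rel_inv_word_append:
  "w \<in> lists (A \<times> UNIV) \<Longrightarrow> (inv_word w @ w, []) \<in> pres_rel A R"
  using pres_rel_append_inv_word[of "inv_word w" A R] by simp

abbreviation pres_class :: "'a set \<Rightarrow> ('a word \<times> 'a word) set \<Rightarrow> 'a word \<Rightarrow> 'a word set" where
  "pres_class A R w \<equiv> pres_rel A R `` {w}"

lemma pres_class_eq_iff:
  "u \<in> lists (A \<times> UNIV) \<Longrightarrow> v \<in> lists (A \<times> UNIV) \<Longrightarrow>
   pres_class A R u = pres_class A R v \<longleftrightarrow> (u, v) \<in> pres_rel A R"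
  using equiv_pres_rel by (metis equiv_class_eq_iff)

lemma pres_class_eqI: "(u, v) \<in> pres_rel A R \<Longrightarrow> pres_class A R u = pres_class A R v"
  using equiv_pres_rel equiv_class_eq by metis

lemma in_pres_class: "u \<in> lists (A \<times> UNIV) \<Longrightarrow> u \<in> pres_class A R u"
  using equiv_pres_rel by (metis equiv_class_self)

lemma carrier_pres_group:
  "carrier (pres_group A R) = {pres_class A R w | w. w \<in> lists (A \<times> UNIV)}"
  by (auto simp: pres_group_def quotient_def)

lemma one_pres_group: "\<one>\<^bsub>pres_group A R\<^esub> = pres_class A R []"
  by (simp add: pres_group_def)

lemma mult_pres_group:
  assumes u: "u \<in> lists (A \<times> UNIV)" and v: "v \<in> lists (A \<times> UNIV)"
  shows "pres_class A R u \<otimes>\<^bsub>pres_group A R\<^esub> pres_class A R v = pres_class A R (u @ v)"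
proof -
  define x where "x = (SOME x. x \<in> pres_class A R u)"
  define y where "y = (SOME y. y \<in> pres_class A R v)"
  have "x \<in> pres_class A R u" unfolding x_def by (rule someI, rule in_pres_class[OF u])
  moreover have "y \<in> pres_class A R v" unfolding y_def by (rule someI, rule in_pres_class[OF v])
  ultimately have "(x @ y, u @ v) \<in> pres_rel A R"
    by (blast intro: pres_rel.cong pres_rel.sym)
  then show ?thesis
    unfolding pres_group_def using pres_class_eqI x_def y_def by simp
qed

lemma group_pres_group: "group (pres_group A R)"
proof (rule groupI)
  fix x y assume "x \<in> carrier (pres_group A R)" "y \<in> carrier (pres_group A R)"
  then obtain u v where "u \<in> lists (A \<times> UNIV)" "v \<in> lists (A \<times> UNIV)"
    "x = pres_class A R u" "y = pres_class A R v"
    unfolding carrier_pres_group by blast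
  then have "x \<otimes>\<^bsub>pres_group A R\<^esub> y = pres_class A R (u @ v)" "u @ v \<in> lists (A \<times> UNIV)"
    by (simp_all add: mult_pres_group)
  then show "x \<otimes>\<^bsub>pres_group A R\<^esub> y \<in> carrier (pres_group A R)"
    unfolding carrier_pres_group by blast
next
  show "\<one>\<^bsub>pres_group A R\<^esub> \<in> carrier (pres_group A R)"
    by (auto simp: carrier_pres_group one_pres_group)
next
  fix x y z
  assume "x \<in> carrier (pres_group A R)" "y \<in> carrier (pres_group A R)"
    "z \<in> carrier (pres_group A R)"
  then obtain u v w where "u \<in> lists (A \<times> UNIV)" "v \<in> lists (A \<times> UNIV)" "w \<in> lists (A \<times> UNIV)"
    "x = pres_class A R u" "y = pres_class A R v" "z = pres_class A R w"
    unfolding carrier_pres_group by blast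
  then show "x \<otimes>\<^bsub>pres_group A R\<^esub> y \<otimes>\<^bsub>pres_group A R\<^esub> z =
      x \<otimes>\<^bsub>pres_group A R\<^esub> (y \<otimes>\<^bsub>pres_group A R\<^esub> z)"
    by (simp add: mult_pres_group)
next
  fix x assume "x \<in> carrier (pres_group A R)"
  then obtain u where "u \<in> lists (A \<times> UNIV)" "x = pres_class A R u"
    unfolding carrier_pres_group by blast
  then show "\<one>\<^bsub>pres_group A R\<^esub> \<otimes>\<^bsub>pres_group A R\<^esub> x = x"
    using mult_pres_group[of "[]" A u R] by (simp add: one_pres_group)
next
  fix x assume "x \<in> carrier (pres_group A R)"
  then obtain w where w: "w \<in> lists (A \<times> UNIV)" and x: "x = pres_class A R w"
    unfolding carrier_pres_group by blast
  have "pres_class A R (inv_word w) \<otimes>\<^bsub>pres_group A R\<^esub> x = \<one>\<^bsub>pres_group A R\<^esub>"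
    using w x pres_class_eqI[OF pres_rel_inv_word_append[OF w]]
    by (simp add: mult_pres_group one_pres_group)
  moreover have "inv_word w \<in> lists (A \<times> UNIV)"
    using w by simp
  then have "pres_class A R (inv_word w) \<in> carrier (pres_group A R)"
    unfolding carrier_pres_group by blast
  ultimately show "\<exists>y\<in>carrier (pres_group A R). y \<otimes>\<^bsub>pres_group A R\<^esub> x = \<one>\<^bsub>pres_group A R\<^esub>"
    by blast
qed

lemma inv_pres_group:
  assumes w: "w \<in> lists (A \<times> UNIV)"
  shows "inv\<^bsub>pres_group A R\<^esub> (pres_class A R w) = pres_class A R (inv_word w)"
proof -
  interpret group "pres_group A R" by (rule group_pres_group)
  have "pres_class A R (inv_word w) \<otimes>\<^bsub>pres_group A R\<^esub> pres_class A R w = \<one>\<^bsub>pres_group A R\<^esub>"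
    using w pres_class_eqI[OF pres_rel_inv_word_append[OF w]]
    by (simp add: mult_pres_group one_pres_group)
  moreover have "inv_word w \<in> lists (A \<times> UNIV)"
    using w by simp
  then have "pres_class A R w \<in> carrier (pres_group A R)"
    "pres_class A R (inv_word w) \<in> carrier (pres_group A R)"
    unfolding carrier_pres_group using w by blast+
  ultimately show ?thesis by (intro inv_equality)
qed

abbreviation fb_class :: "nat \<Rightarrow> gen word \<Rightarrow> gen word set" where
  "fb_class n w \<equiv> pres_class (gens n) (rels n) w"

abbreviation \<sigma> :: "nat \<Rightarrow> nat \<Rightarrow> gen word set" where
  "\<sigma> n i \<equiv> elem n (s i)"

abbreviation \<g> :: "nat \<Rightarrow> nat \<Rightarrow> gen word set" where
  "\<g> n i \<equiv> elem n (g i)"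

lemma group_FB: "group (FB n)"
  unfolding FB_def by (rule group_pres_group)

lemma s_in_gens [simp]: "s i \<in> gens n \<longleftrightarrow> 1 \<le> i \<and> i \<le> n - 1"
  by (auto simp: gens_def)

lemma g_in_gens [simp]: "g i \<in> gens n \<longleftrightarrow> 1 \<le> i \<and> i \<le> n"
  by (auto simp: gens_def)

lemma mult_FB:
  "u \<in> lists (gens n \<times> UNIV) \<Longrightarrow> v \<in> lists (gens n \<times> UNIV) \<Longrightarrow>
   fb_class n u \<otimes>\<^bsub>FB n\<^esub> fb_class n v = fb_class n (u @ v)"
  unfolding FB_def by (rule mult_pres_group)

lemma fb_class_in_carrier: "u \<in> lists (gens n \<times> UNIV) \<Longrightarrow> fb_class n u \<in> carrier (FB n)"
  unfolding FB_def carrier_pres_group by blast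

lemma one_FB: "\<one>\<^bsub>FB n\<^esub> = fb_class n []"
  unfolding FB_def by (rule one_pres_group)

lemma inv_elem: "x \<in> gens n \<Longrightarrow> inv\<^bsub>FB n\<^esub> (elem n x) = fb_class n [(x, True)]"
  unfolding elem_def FB_def using inv_pres_group[of "[(x, False)]" "gens n" "rels n"] by simp

lemma fb_class_rel:
  "(u, v) \<in> rels n \<Longrightarrow> u \<in> lists (gens n \<times> UNIV) \<Longrightarrow> v \<in> lists (gens n \<times> UNIV) \<Longrightarrow>
   fb_class n u = fb_class n v"
  by (rule pres_class_eqI, rule pres_rel.rel)

context
  fixes n :: nat
begin

interpretation G: group "FB n" by (rule group_FB)

lemmas group_FB_simps = G.m_assoc G.r_inv G.l_inv G.inv_closed G.m_closed G.l_one G.r_one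
  G.inv_mult_cancel_left G.mult_inv_cancel_left

lemma \<sigma>_in_carrier [simp]: "1 \<le> i \<Longrightarrow> i \<le> n - 1 \<Longrightarrow> \<sigma> n i \<in> carrier (FB n)"
  unfolding elem_def by (rule fb_class_in_carrier) simp

lemma \<g>_in_carrier [simp]: "1 \<le> i \<Longrightarrow> i \<le> n \<Longrightarrow> \<g> n i \<in> carrier (FB n)"
  unfolding elem_def by (rule fb_class_in_carrier) simp

lemma \<sigma>_far_commute:
  assumes "1 \<le> i" "i \<le> n - 1" "1 \<le> j" "j \<le> n - 1" "i + 1 < j \<or> j + 1 < i"
  shows "\<sigma> n i \<otimes>\<^bsub>FB n\<^esub> \<sigma> n j = \<sigma> n j \<otimes>\<^bsub>FB n\<^esub> \<sigma> n i"
proof -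
  have "([(s i, False), (s j, False)], [(s j, False), (s i, False)]) \<in> rels n"
    unfolding rels_def using assms by (intro UnI1) blast
  then show ?thesis unfolding elem_def using assms by (simp add: mult_FB fb_class_rel)
qed

lemma \<sigma>_braid:
  assumes "1 \<le> i" "i + 1 \<le> n - 1"
  shows "\<sigma> n i \<otimes>\<^bsub>FB n\<^esub> \<sigma> n (i + 1) \<otimes>\<^bsub>FB n\<^esub> \<sigma> n i
       = \<sigma> n (i + 1) \<otimes>\<^bsub>FB n\<^esub> \<sigma> n i \<otimes>\<^bsub>FB n\<^esub> \<sigma> n (i + 1)"
proof -
  have "([(s i, False), (s (i + 1), False), (s i, False)],
         [(s (i + 1), False), (s i, False), (s (i + 1), False)]) \<in> rels n"
    unfolding rels_def using assms by (intro UnI1 UnI2) auto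
  then show ?thesis unfolding elem_def using assms by (simp add: mult_FB fb_class_rel)
qed

lemma \<g>_Suc_\<sigma>:
  assumes "1 \<le> i" "i \<le> n - 1"
  shows "\<g> n (i + 1) \<otimes>\<^bsub>FB n\<^esub> \<sigma> n i = \<sigma> n i \<otimes>\<^bsub>FB n\<^esub> \<g> n i"
proof -
  have "([(g (i + 1), False), (s i, False)], [(s i, False), (g i, False)]) \<in> rels n"
    unfolding rels_def using assms by (intro UnI1 UnI2) auto
  then show ?thesis unfolding elem_def using assms by (simp add: mult_FB fb_class_rel)
qed

lemma \<g>_\<sigma>:
  assumes "1 \<le> i" "i \<le> n - 1"
  shows "\<g> n i \<otimes>\<^bsub>FB n\<^esub> \<sigma> n i
       = \<sigma> n i \<otimes>\<^bsub>FB n\<^esub> \<g> n i \<otimes>\<^bsub>FB n\<^esub> \<g> n (i + 1) \<otimes>\<^bsub>FB n\<^esub> inv\<^bsub>FB n\<^esub> \<g> n i"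
proof -
  have "([(g i, False), (s i, False)], [(s i, False), (g i, False), (g (i + 1), False), (g i, True)])
        \<in> rels n"
    unfolding rels_def using assms by (intro UnI1 UnI2) auto
  moreover have "inv\<^bsub>FB n\<^esub> \<g> n i = fb_class n [(g i, True)]"
    using assms by (intro inv_elem) simp
  moreover have "i \<le> n" "i + 1 \<le> n" using assms by auto
  ultimately show ?thesis unfolding elem_def using assms by (simp add: mult_FB fb_class_rel)
qed

lemma \<g>_\<sigma>_commute:
  assumes "1 \<le> i" "i \<le> n - 1" "1 \<le> j" "j \<le> n" "j \<noteq> i" "j \<noteq> i + 1"
  shows "\<g> n j \<otimes>\<^bsub>FB n\<^esub> \<sigma> n i = \<sigma> n i \<otimes>\<^bsub>FB n\<^esub> \<g> n j"
proof -
  have "([(g j, False), (s i, False)], [(s i, False), (g j, False)]) \<in> rels n"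
    unfolding rels_def using assms by (intro UnI2) blast
  then show ?thesis unfolding elem_def using assms by (simp add: mult_FB fb_class_rel)
qed

end

section \<open>The integral group ring \<open>\<int>[F\<^sub>n \<rtimes> B\<^sub>n]\<close>\<close>

abbreviation fin_supp :: "grelt \<Rightarrow> bool" where
  "fin_supp x \<equiv> finite (gr_supp x)"

abbreviation in_ZFB :: "nat \<Rightarrow> grelt \<Rightarrow> bool" where
  "in_ZFB n x \<equiv> in_group_ring (carrier (FB n)) x"

definition gr_scale :: "int \<Rightarrow> grelt \<Rightarrow> grelt" where
  "gr_scale c x = (\<lambda>\<gamma>. c * x \<gamma>)"

lemma gr_zero_eq: "gr_zero = 0"
  by (auto simp: gr_zero_def)

lemma gr_diff_eq: "gr_diff x y = x - y"
  by (auto simp: gr_diff_def)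

lemma gr_supp_add: "gr_supp (x + y) \<subseteq> gr_supp x \<union> gr_supp y"
  by (auto simp: gr_supp_def)

lemma gr_supp_diff: "gr_supp (x - y) \<subseteq> gr_supp x \<union> gr_supp y"
  by (auto simp: gr_supp_def)

lemma gr_supp_scale: "gr_supp (gr_scale c x) \<subseteq> gr_supp x"
  by (auto simp: gr_supp_def gr_scale_def)

lemma gr_supp_gr_of [simp]: "gr_supp (gr_of a) = {a}"
  by (auto simp: gr_supp_def gr_of_def)

lemma gr_supp_zero [simp]: "gr_supp 0 = {}"
  by (auto simp: gr_supp_def)

lemma gr_supp_sum: "gr_supp (\<Sum>i\<in>I. f i) \<subseteq> (\<Union>i\<in>I. gr_supp (f i))"
  by (auto simp: gr_supp_def sum_fun_apply intro: ccontr
      elim!: sum.not_neutral_contains_not_neutral)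

lemma gr_supp_mult:
  "gr_supp (gr_mult n x y) \<subseteq> (\<lambda>(a, b). a \<otimes>\<^bsub>FB n\<^esub> b) ` (gr_supp x \<times> gr_supp y)"
  unfolding gr_mult_def gr_supp_def
  by (auto intro: ccontr elim!: sum.not_neutral_contains_not_neutral split: if_splits)

lemma fin_supp_add: "fin_supp x \<Longrightarrow> fin_supp y \<Longrightarrow> fin_supp (x + y)"
  using gr_supp_add finite_subset by blast

lemma fin_supp_diff: "fin_supp x \<Longrightarrow> fin_supp y \<Longrightarrow> fin_supp (x - y)"
  using gr_supp_diff finite_subset by blast

lemma fin_supp_scale: "fin_supp x \<Longrightarrow> fin_supp (gr_scale c x)"
  using gr_supp_scale finite_subset by blast

lemma fin_supp_sum: "finite I \<Longrightarrow> (\<And>i. i \<in> I \<Longrightarrow> fin_supp (f i)) \<Longrightarrow> fin_supp (\<Sum>i\<in>I. f i)"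
  using gr_supp_sum finite_subset by (metis (no_types, lifting) finite_UN_I)

lemma fin_supp_mult: "fin_supp x \<Longrightarrow> fin_supp y \<Longrightarrow> fin_supp (gr_mult n x y)"
  using gr_supp_mult finite_subset by (metis finite_SigmaI finite_imageI)

lemma in_ZFB_fin_supp: "in_ZFB n x \<Longrightarrow> fin_supp x"
  by (simp add: in_group_ring_def)

lemma in_ZFB_zero [simp]: "in_ZFB n 0"
  by (simp add: in_group_ring_def)

lemma in_ZFB_gr_of: "a \<in> carrier (FB n) \<Longrightarrow> in_ZFB n (gr_of a)"
  by (simp add: in_group_ring_def)

lemma in_ZFB_diff: "in_ZFB n x \<Longrightarrow> in_ZFB n y \<Longrightarrow> in_ZFB n (x - y)"
  unfolding in_group_ring_def using gr_supp_diff fin_supp_diff by blast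

lemma in_ZFB_sum: "finite I \<Longrightarrow> (\<And>i. i \<in> I \<Longrightarrow> in_ZFB n (f i)) \<Longrightarrow> in_ZFB n (\<Sum>i\<in>I. f i)"
  unfolding in_group_ring_def using fin_supp_sum gr_supp_sum
  by (metis (no_types, lifting) UN_least subset_trans)

lemma in_ZFB_mult: "in_ZFB n x \<Longrightarrow> in_ZFB n y \<Longrightarrow> in_ZFB n (gr_mult n x y)"
proof -
  interpret G: group "FB n" by (rule group_FB)
  assume x: "in_ZFB n x" and y: "in_ZFB n y"
  then have "(\<lambda>(a, b). a \<otimes>\<^bsub>FB n\<^esub> b) ` (gr_supp x \<times> gr_supp y) \<subseteq> carrier (FB n)"
    unfolding in_group_ring_def by auto
  then show ?thesis
    using x y gr_supp_mult[of n x y] fin_supp_mult[of x y n] unfolding in_group_ring_def by auto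
qed

lemma in_ZFB_one: "in_ZFB n (gr_one n)"
  unfolding gr_one_def by (rule in_ZFB_gr_of, rule monoid.one_closed[OF group.is_monoid[OF group_FB]])

lemma gr_mult_on_superset:
  assumes "finite S" "finite T" "gr_supp x \<subseteq> S" "gr_supp y \<subseteq> T"
  shows "gr_mult n x y \<gamma> = (\<Sum>a\<in>S. \<Sum>b\<in>T. if a \<otimes>\<^bsub>FB n\<^esub> b = \<gamma> then x a * y b else 0)"
proof -
  have "gr_mult n x y \<gamma> = (\<Sum>(a, b)\<in>S \<times> T. if a \<otimes>\<^bsub>FB n\<^esub> b = \<gamma> then x a * y b else 0)"
    unfolding gr_mult_def
    by (rule sum.mono_neutral_left) (use assms in \<open>auto simp: gr_supp_def split: if_splits\<close>)
  then show ?thesis by (simp add: sum.cartesian_product)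
qed

lemma gr_scale_gr_of: "gr_scale c (gr_of a) = (\<lambda>\<gamma>. if \<gamma> = a then c else 0)"
  by (auto simp: gr_scale_def gr_of_def)

lemma gr_eq_sum_gr_of: "fin_supp x \<Longrightarrow> x = (\<Sum>a\<in>gr_supp x. gr_scale (x a) (gr_of a))"
  by (rule ext) (simp add: sum_fun_apply gr_scale_gr_of gr_supp_def)

lemma gr_mult_eq_sum_gr_of:
  assumes "finite S" "finite T" "gr_supp x \<subseteq> S" "gr_supp y \<subseteq> T"
  shows "gr_mult n x y = (\<Sum>a\<in>S. \<Sum>b\<in>T. gr_scale (x a * y b) (gr_of (a \<otimes>\<^bsub>FB n\<^esub> b)))"
  by (rule ext) (simp add: gr_mult_on_superset[OF assms] sum_fun_apply gr_scale_gr_of eq_commute)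

lemma gr_of_self [simp]: "gr_of a a = 1"
  by (simp add: gr_of_def)

lemma gr_mult_gr_of: "gr_mult n (gr_of a) (gr_of b) = gr_of (a \<otimes>\<^bsub>FB n\<^esub> b)"
  by (subst gr_mult_eq_sum_gr_of[of "{a}" "{b}"]) (simp_all add: gr_scale_gr_of, simp add: gr_of_def)

lemma gr_mult_zero_left [simp]: "gr_mult n 0 z = 0"
  by (rule ext) (simp add: gr_mult_def gr_supp_def)

lemma gr_mult_zero_right [simp]: "gr_mult n z 0 = 0"
  by (rule ext) (simp add: gr_mult_def gr_supp_def)

lemma gr_mult_add_left:
  assumes "fin_supp x" "fin_supp y" "fin_supp z"
  shows "gr_mult n (x + y) z = gr_mult n x z + gr_mult n y z"
proof
  fix \<gamma>
  let ?S = "gr_supp x \<union> gr_supp y"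
  show "gr_mult n (x + y) z \<gamma> = (gr_mult n x z + gr_mult n y z) \<gamma>"
    using assms gr_supp_add[of x y]
    by (simp add: gr_mult_on_superset[of ?S "gr_supp z"] sum.distrib[symmetric])
      (intro sum.cong HOL.refl, simp add: distrib_right)
qed

lemma gr_mult_add_right:
  assumes "fin_supp x" "fin_supp y" "fin_supp z"
  shows "gr_mult n z (x + y) = gr_mult n z x + gr_mult n z y"
proof
  fix \<gamma>
  let ?T = "gr_supp x \<union> gr_supp y"
  show "gr_mult n z (x + y) \<gamma> = (gr_mult n z x + gr_mult n z y) \<gamma>"
    using assms gr_supp_add[of x y]
    by (simp add: gr_mult_on_superset[of "gr_supp z" ?T] sum.distrib[symmetric])
      (intro sum.cong HOL.refl, simp add: distrib_left)
qed

lemma gr_mult_diff_left: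
  assumes "fin_supp x" "fin_supp y" "fin_supp z"
  shows "gr_mult n (x - y) z = gr_mult n x z - gr_mult n y z"
  using gr_mult_add_left[OF fin_supp_diff[OF assms(1,2)] assms(2,3)] by (simp add: eq_diff_eq)

lemma gr_mult_diff_right:
  assumes "fin_supp x" "fin_supp y" "fin_supp z"
  shows "gr_mult n z (x - y) = gr_mult n z x - gr_mult n z y"
  using gr_mult_add_right[OF fin_supp_diff[OF assms(1,2)] assms(2,3)] by (simp add: eq_diff_eq)

lemma gr_mult_scale_left:
  assumes "fin_supp x" "fin_supp z"
  shows "gr_mult n (gr_scale c x) z = gr_scale c (gr_mult n x z)"
proof
  fix \<gamma>
  show "gr_mult n (gr_scale c x) z \<gamma> = gr_scale c (gr_mult n x z) \<gamma>"
    using assms gr_supp_scale[of c x]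
    by (simp add: gr_mult_on_superset[of "gr_supp x" "gr_supp z"] gr_scale_def sum_distrib_left)
      (intro sum.cong HOL.refl, simp)
qed

lemma gr_mult_scale_right:
  assumes "fin_supp x" "fin_supp z"
  shows "gr_mult n z (gr_scale c x) = gr_scale c (gr_mult n z x)"
proof
  fix \<gamma>
  show "gr_mult n z (gr_scale c x) \<gamma> = gr_scale c (gr_mult n z x) \<gamma>"
    using assms gr_supp_scale[of c x]
    by (simp add: gr_mult_on_superset[of "gr_supp z" "gr_supp x"] gr_scale_def sum_distrib_left)
      (intro sum.cong HOL.refl, simp add: mult_ac)
qed

lemma gr_mult_sum_left:
  "finite I \<Longrightarrow> (\<And>i. i \<in> I \<Longrightarrow> fin_supp (f i)) \<Longrightarrow> fin_supp z \<Longrightarrow>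
   gr_mult n (\<Sum>i\<in>I. f i) z = (\<Sum>i\<in>I. gr_mult n (f i) z)"
  by (induction I rule: finite_induct) (simp_all add: gr_mult_add_left fin_supp_sum)

lemma gr_mult_sum_right:
  "finite I \<Longrightarrow> (\<And>i. i \<in> I \<Longrightarrow> fin_supp (f i)) \<Longrightarrow> fin_supp z \<Longrightarrow>
   gr_mult n z (\<Sum>i\<in>I. f i) = (\<Sum>i\<in>I. gr_mult n z (f i))"
  by (induction I rule: finite_induct) (simp_all add: gr_mult_add_right fin_supp_sum)

lemma gr_scale_sum: "gr_scale c (\<Sum>i\<in>I. f i) = (\<Sum>i\<in>I. gr_scale c (f i))"
  by (rule ext) (simp add: gr_scale_def sum_fun_apply sum_distrib_left)

lemma gr_scale_scale: "gr_scale c (gr_scale d x) = gr_scale (c * d) x"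
  by (auto simp: gr_scale_def)

lemma gr_mult_assoc:
  assumes x: "in_ZFB n x" and y: "in_ZFB n y" and z: "in_ZFB n z"
  shows "gr_mult n (gr_mult n x y) z = gr_mult n x (gr_mult n y z)"
proof -
  interpret G: group "FB n" by (rule group_FB)
  let ?S = "gr_supp x" and ?T = "gr_supp y" and ?U = "gr_supp z"
  have f: "finite ?S" "finite ?T" "finite ?U"
    and c: "?S \<subseteq> carrier (FB n)" "?T \<subseteq> carrier (FB n)" "?U \<subseteq> carrier (FB n)"
    using x y z by (auto simp: in_group_ring_def)
  have "gr_mult n (gr_mult n x y) z
      = gr_mult n (\<Sum>a\<in>?S. \<Sum>b\<in>?T. gr_scale (x a * y b) (gr_of (a \<otimes>\<^bsub>FB n\<^esub> b)))
                  (\<Sum>c\<in>?U. gr_scale (z c) (gr_of c))"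
    using f by (simp add: gr_mult_eq_sum_gr_of flip: gr_eq_sum_gr_of)
  also have "\<dots> = (\<Sum>a\<in>?S. \<Sum>b\<in>?T. gr_mult n (gr_scale (x a * y b) (gr_of (a \<otimes>\<^bsub>FB n\<^esub> b)))
                    (\<Sum>c\<in>?U. gr_scale (z c) (gr_of c)))"
    using f by (simp add: gr_mult_sum_left fin_supp_sum fin_supp_scale)
  also have "\<dots> = (\<Sum>a\<in>?S. \<Sum>b\<in>?T. \<Sum>c\<in>?U.
                    gr_scale (x a * y b * z c) (gr_of (a \<otimes>\<^bsub>FB n\<^esub> b \<otimes>\<^bsub>FB n\<^esub> c)))"
    using f by (simp add: gr_mult_sum_right fin_supp_scale gr_mult_scale_left gr_mult_scale_right
        gr_mult_gr_of gr_scale_scale mult_ac)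
  also have "\<dots> = (\<Sum>a\<in>?S. \<Sum>b\<in>?T. \<Sum>c\<in>?U.
                    gr_scale (x a * (y b * z c)) (gr_of (a \<otimes>\<^bsub>FB n\<^esub> (b \<otimes>\<^bsub>FB n\<^esub> c))))"
    using c by (intro sum.cong HOL.refl) (auto simp: G.m_assoc mult.assoc subset_iff)
  also have "\<dots> = (\<Sum>a\<in>?S. gr_mult n (gr_scale (x a) (gr_of a))
                  (\<Sum>b\<in>?T. \<Sum>c\<in>?U. gr_scale (y b * z c) (gr_of (b \<otimes>\<^bsub>FB n\<^esub> c))))"
    using f by (simp add: gr_mult_sum_right fin_supp_sum fin_supp_scale gr_mult_scale_left
        gr_mult_scale_right gr_mult_gr_of gr_scale_scale gr_scale_sum mult_ac)
  also have "\<dots> = gr_mult n (\<Sum>a\<in>?S. gr_scale (x a) (gr_of a))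
                  (\<Sum>b\<in>?T. \<Sum>c\<in>?U. gr_scale (y b * z c) (gr_of (b \<otimes>\<^bsub>FB n\<^esub> c)))"
    using f by (simp add: gr_mult_sum_left fin_supp_sum fin_supp_scale)
  also have "\<dots> = gr_mult n x (gr_mult n y z)"
    using f by (simp add: gr_mult_eq_sum_gr_of flip: gr_eq_sum_gr_of)
  finally show ?thesis .
qed

lemma gr_mult_one_left: "in_ZFB n x \<Longrightarrow> gr_mult n (gr_one n) x = x"
proof -
  interpret G: group "FB n" by (rule group_FB)
  assume x: "in_ZFB n x"
  then have f: "fin_supp x" and c: "gr_supp x \<subseteq> carrier (FB n)"
    by (auto simp: in_group_ring_def)
  have "gr_mult n (gr_one n) x = (\<Sum>a\<in>gr_supp x. gr_scale (x a) (gr_of (\<one>\<^bsub>FB n\<^esub> \<otimes>\<^bsub>FB n\<^esub> a)))"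
    using f by (subst (1) gr_eq_sum_gr_of[OF f])
      (simp add: gr_one_def gr_mult_sum_right fin_supp_scale gr_mult_scale_right gr_mult_gr_of)
  also have "\<dots> = x"
    using c by (subst (3) gr_eq_sum_gr_of[OF f]) (intro sum.cong HOL.refl, auto)
  finally show ?thesis .
qed

lemma gr_mult_one_right: "in_ZFB n x \<Longrightarrow> gr_mult n x (gr_one n) = x"
proof -
  interpret G: group "FB n" by (rule group_FB)
  assume x: "in_ZFB n x"
  then have f: "fin_supp x" and c: "gr_supp x \<subseteq> carrier (FB n)"
    by (auto simp: in_group_ring_def)
  have "gr_mult n x (gr_one n) = (\<Sum>a\<in>gr_supp x. gr_scale (x a) (gr_of (a \<otimes>\<^bsub>FB n\<^esub> \<one>\<^bsub>FB n\<^esub>)))"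
    using f by (subst (1) gr_eq_sum_gr_of[OF f])
      (simp add: gr_one_def gr_mult_sum_left fin_supp_scale gr_mult_scale_left gr_mult_gr_of)
  also have "\<dots> = x"
    using c by (subst (3) gr_eq_sum_gr_of[OF f]) (intro sum.cong HOL.refl, auto)
  finally show ?thesis .
qed

lemma gm_mult_entry: "gm_mult n A B k l = (\<Sum>m<n. gr_mult n (A k m) (B m l))"
  unfolding gm_mult_def by (rule ext) (simp add: sum_fun_apply)

lemma gm_wfD:
  "gm_wf n A \<Longrightarrow> in_ZFB n (A k l)"
  "gm_wf n A \<Longrightarrow> n \<le> k \<Longrightarrow> A k l = 0"
  "gm_wf n A \<Longrightarrow> n \<le> l \<Longrightarrow> A k l = 0"
  by (auto simp: gm_wf_def gr_zero_eq)

lemma gm_wfI: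
  "(\<And>k l. in_ZFB n (A k l)) \<Longrightarrow> (\<And>k l. n \<le> k \<or> n \<le> l \<Longrightarrow> A k l = 0) \<Longrightarrow> gm_wf n A"
  by (auto simp: gm_wf_def gr_zero_eq)

lemma gm_wf_mult:
  assumes A: "gm_wf n A" and B: "gm_wf n B"
  shows "gm_wf n (gm_mult n A B)"
proof (rule gm_wfI)
  fix k l
  show "in_ZFB n (gm_mult n A B k l)"
    unfolding gm_mult_entry by (intro in_ZFB_sum in_ZFB_mult gm_wfD[OF A] gm_wfD[OF B]) auto
  show "gm_mult n A B k l = 0" if "n \<le> k \<or> n \<le> l"
    using that gm_wfD(2)[OF A] gm_wfD(3)[OF B] unfolding gm_mult_entry by auto
qed

lemma gm_wf_one: "gm_wf n (gm_one n)"
  by (rule gm_wfI) (auto simp: gm_one_def in_ZFB_one gr_zero_eq)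

lemma gm_mult_assoc:
  assumes A: "gm_wf n A" and B: "gm_wf n B" and C: "gm_wf n C"
  shows "gm_mult n (gm_mult n A B) C = gm_mult n A (gm_mult n B C)"
proof (rule ext, rule ext)
  fix k l
  have f: "fin_supp (A k l)" "fin_supp (B k l)" "fin_supp (C k l)" for k l
    using gm_wfD(1)[OF A] gm_wfD(1)[OF B] gm_wfD(1)[OF C] in_ZFB_fin_supp by blast+
  have "gm_mult n (gm_mult n A B) C k l
      = (\<Sum>m<n. \<Sum>p<n. gr_mult n (gr_mult n (A k p) (B p m)) (C m l))"
    unfolding gm_mult_entry by (intro sum.cong HOL.refl gr_mult_sum_left) (auto intro: fin_supp_mult f)
  also have "\<dots> = (\<Sum>m<n. \<Sum>p<n. gr_mult n (A k p) (gr_mult n (B p m) (C m l)))"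
    by (intro sum.cong HOL.refl gr_mult_assoc gm_wfD[OF A] gm_wfD[OF B] gm_wfD[OF C])
  also have "\<dots> = (\<Sum>p<n. \<Sum>m<n. gr_mult n (A k p) (gr_mult n (B p m) (C m l)))"
    by (rule sum.swap)
  also have "\<dots> = gm_mult n A (gm_mult n B C) k l"
    unfolding gm_mult_entry
    by (intro sum.cong HOL.refl gr_mult_sum_right[symmetric]) (auto intro: fin_supp_mult f)
  finally show "gm_mult n (gm_mult n A B) C k l = gm_mult n A (gm_mult n B C) k l" .
qed

lemma gm_mult_one_left:
  assumes A: "gm_wf n A"
  shows "gm_mult n (gm_one n) A = A"
proof (rule ext, rule ext)
  fix k l
  show "gm_mult n (gm_one n) A k l = A k l"
  proof (cases "k < n")
    case True
    have "gm_mult n (gm_one n) A k l = (\<Sum>m<n. if m = k then gr_mult n (gr_one n) (A k l) else 0)"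
      unfolding gm_mult_entry by (intro sum.cong HOL.refl) (auto simp: gm_one_def gr_zero_eq)
    then show ?thesis using True by (simp add: gr_mult_one_left gm_wfD(1)[OF A])
  next
    case False
    then show ?thesis using gm_wfD(2)[OF A] by (simp add: gm_mult_entry gm_one_def gr_zero_eq)
  qed
qed

lemma gm_mult_one_right:
  assumes A: "gm_wf n A"
  shows "gm_mult n A (gm_one n) = A"
proof (rule ext, rule ext)
  fix k l
  show "gm_mult n A (gm_one n) k l = A k l"
  proof (cases "l < n")
    case True
    have "gm_mult n A (gm_one n) k l = (\<Sum>m<n. if m = l then gr_mult n (A k l) (gr_one n) else 0)"
      unfolding gm_mult_entry by (intro sum.cong HOL.refl) (auto simp: gm_one_def gr_zero_eq)
    then show ?thesis using True by (simp add: gr_mult_one_right gm_wfD(1)[OF A])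
  next
    case False
    then show ?thesis using gm_wfD(3)[OF A] by (simp add: gm_mult_entry gm_one_def gr_zero_eq)
  qed
qed

text \<open>\<open>\<phi>(\<sigma>\<^sub>i)\<close> is the scalar \<open>\<sigma>\<^sub>i\<close> outside rows and columns \<open>i - 1, i\<close>
  (0-based), so products of such matrices only have to be computed on a small window.\<close>

definition scalar_outside :: "nat \<Rightarrow> nat set \<Rightarrow> grelt \<Rightarrow> grmat \<Rightarrow> bool" where
  "scalar_outside n W c A \<longleftrightarrow>
     (\<forall>k l. k \<notin> W \<or> l \<notin> W \<longrightarrow> A k l = (if k = l \<and> k < n then c else 0))"

lemma scalar_outsideD:
  "scalar_outside n W c A \<Longrightarrow> k \<notin> W \<or> l \<notin> W \<Longrightarrow> A k l = (if k = l \<and> k < n then c else 0)"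
  by (simp add: scalar_outside_def)

lemma scalar_outside_mono: "scalar_outside n W c A \<Longrightarrow> W \<subseteq> W' \<Longrightarrow> scalar_outside n W' c A"
  unfolding scalar_outside_def by blast

lemma scalar_outside_gm_one: "scalar_outside n W (gr_one n) (gm_one n)"
  by (auto simp: scalar_outside_def gm_one_def gr_zero_eq)

lemma gm_mult_entry_window:
  assumes W: "W \<subseteq> {..<n}" and A: "scalar_outside n W a A" and k: "k \<in> W"
  shows "gm_mult n A B k l = (\<Sum>m\<in>W. gr_mult n (A k m) (B m l))"
  unfolding gm_mult_entry
  by (rule sum.mono_neutral_right) (use W scalar_outsideD[OF A] k in auto)

lemma scalar_outside_gm_mult:
  assumes A: "scalar_outside n W a A" and B: "scalar_outside n W b B"
  shows "scalar_outside n W (gr_mult n a b) (gm_mult n A B)"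
  unfolding scalar_outside_def
proof (intro allI impI)
  fix k l assume kl: "k \<notin> W \<or> l \<notin> W"
  show "gm_mult n A B k l = (if k = l \<and> k < n then gr_mult n a b else 0)"
  proof (cases "k \<in> W")
    case False
    have "gm_mult n A B k l = (\<Sum>m<n. if m = k then (if k < n then gr_mult n a (B k l) else 0) else 0)"
      unfolding gm_mult_entry by (intro sum.cong HOL.refl) (auto simp: scalar_outsideD[OF A] False)
    then show ?thesis using scalar_outsideD[OF B, of k l] False by auto
  next
    case True
    then have l: "l \<notin> W" using kl by blast
    have "gm_mult n A B k l = (\<Sum>m<n. if m = l then (if l < n then gr_mult n (A k l) b else 0) else 0)"
      unfolding gm_mult_entry by (intro sum.cong HOL.refl) (auto simp: scalar_outsideD[OF B] l)
    then show ?thesis using scalar_outsideD[OF A, of k l] l by auto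
  qed
qed

lemma scalar_outside_eqI:
  assumes "scalar_outside n W a A" "scalar_outside n W a B"
    and "\<And>k l. k \<in> W \<Longrightarrow> l \<in> W \<Longrightarrow> A k l = B k l"
  shows "A = B"
proof (rule ext, rule ext)
  fix k l
  show "A k l = B k l"
    using assms scalar_outsideD[OF assms(1), of k l] scalar_outsideD[OF assms(2), of k l]
    by (cases "k \<in> W \<and> l \<in> W") auto
qed

section \<open>The matrices \<open>\<phi>(\<sigma>\<^sub>i)\<close> and their inverses\<close>

text \<open>The entries of \<open>R\<^sub>i\<^sup>-\<^sup>1 = [[1 - g\<^sub>i\<^sup>-\<^sup>1, 1], [g\<^sub>i\<^sup>-\<^sup>1, 0]]\<close>, each multiplied on
  the right by \<open>\<sigma>\<^sub>i\<^sup>-\<^sup>1\<close>.\<close>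
definition phi_gen_inverse :: "nat \<Rightarrow> nat \<Rightarrow> grmat" where
  "phi_gen_inverse n i = (\<lambda>k l. if n \<le> k \<or> n \<le> l then 0
     else if k = i - 1 \<and> l = i - 1
       then gr_of (inv\<^bsub>FB n\<^esub> \<sigma> n i) - gr_of (inv\<^bsub>FB n\<^esub> \<g> n i \<otimes>\<^bsub>FB n\<^esub> inv\<^bsub>FB n\<^esub> \<sigma> n i)
     else if k = i - 1 \<and> l = i then gr_of (inv\<^bsub>FB n\<^esub> \<sigma> n i)
     else if k = i \<and> l = i - 1 then gr_of (inv\<^bsub>FB n\<^esub> \<g> n i \<otimes>\<^bsub>FB n\<^esub> inv\<^bsub>FB n\<^esub> \<sigma> n i)
     else if k = i \<and> l = i then 0
     else if k = l then gr_of (inv\<^bsub>FB n\<^esub> \<sigma> n i) else 0)"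

context
  fixes n j :: nat
  assumes j: "j + 2 \<le> n"
begin

interpretation G: group "FB n" by (rule group_FB)

lemma \<sigma>_\<g>_Suc_in_carrier [simp]:
  "\<sigma> n (Suc j) \<in> carrier (FB n)" "\<g> n (Suc j) \<in> carrier (FB n)" "\<g> n (Suc (Suc j)) \<in> carrier (FB n)"
  using j by auto

lemma phi_gen_entries: "phi_gen n (Suc j) k l = (if n \<le> k \<or> n \<le> l then 0
     else if k = j \<and> l = j then 0
     else if k = j \<and> l = Suc j then gr_of (\<sigma> n (Suc j) \<otimes>\<^bsub>FB n\<^esub> \<g> n (Suc j))
     else if k = Suc j \<and> l = j then gr_of (\<sigma> n (Suc j))
     else if k = Suc j \<and> l = Suc j
       then gr_of (\<sigma> n (Suc j)) - gr_of (\<sigma> n (Suc j) \<otimes>\<^bsub>FB n\<^esub> \<g> n (Suc j))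
     else if k = l then gr_of (\<sigma> n (Suc j)) else 0)"
  unfolding phi_gen_def diagR_def
  by (auto simp: gr_mult_diff_right gr_mult_gr_of gr_one_def gr_zero_eq gr_diff_eq)

lemma phi_gen_inverse_entries: "phi_gen_inverse n (Suc j) k l = (if n \<le> k \<or> n \<le> l then 0
     else if k = j \<and> l = j then gr_of (inv\<^bsub>FB n\<^esub> \<sigma> n (Suc j))
       - gr_of (inv\<^bsub>FB n\<^esub> \<g> n (Suc j) \<otimes>\<^bsub>FB n\<^esub> inv\<^bsub>FB n\<^esub> \<sigma> n (Suc j))
     else if k = j \<and> l = Suc j then gr_of (inv\<^bsub>FB n\<^esub> \<sigma> n (Suc j))
     else if k = Suc j \<and> l = j
       then gr_of (inv\<^bsub>FB n\<^esub> \<g> n (Suc j) \<otimes>\<^bsub>FB n\<^esub> inv\<^bsub>FB n\<^esub> \<sigma> n (Suc j))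
     else if k = Suc j \<and> l = Suc j then 0
     else if k = l then gr_of (inv\<^bsub>FB n\<^esub> \<sigma> n (Suc j)) else 0)"
  unfolding phi_gen_inverse_def by simp

lemma scalar_outside_phi_gen:
  "scalar_outside n {j, Suc j} (gr_of (\<sigma> n (Suc j))) (phi_gen n (Suc j))"
  unfolding scalar_outside_def phi_gen_entries by auto

lemma scalar_outside_phi_gen_inverse:
  "scalar_outside n {j, Suc j} (gr_of (inv\<^bsub>FB n\<^esub> \<sigma> n (Suc j))) (phi_gen_inverse n (Suc j))"
  unfolding scalar_outside_def phi_gen_inverse_entries by auto

lemma phi_gen_mult_inverse: "gm_mult n (phi_gen n (Suc j)) (phi_gen_inverse n (Suc j)) = gm_one n"
proof (rule scalar_outside_eqI[OF _ scalar_outside_gm_one])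
  show "scalar_outside n {j, Suc j} (gr_one n) (gm_mult n (phi_gen n (Suc j)) (phi_gen_inverse n (Suc j)))"
    using scalar_outside_gm_mult[OF scalar_outside_phi_gen scalar_outside_phi_gen_inverse]
    by (simp add: gr_mult_gr_of gr_one_def)
next
  fix k l assume k: "k \<in> {j, Suc j}" and l: "l \<in> {j, Suc j}"
  have W: "{j, Suc j} \<subseteq> {..<n}" using j by auto
  from k l show "gm_mult n (phi_gen n (Suc j)) (phi_gen_inverse n (Suc j)) k l = gm_one n k l"
    unfolding gm_mult_entry_window[OF W scalar_outside_phi_gen k] using j
    by (auto simp: phi_gen_entries phi_gen_inverse_entries gr_mult_diff_left gr_mult_diff_right
        gr_mult_gr_of group_FB_simps gm_one_def gr_one_def gr_zero_eq)
qed

lemma phi_gen_inverse_mult: "gm_mult n (phi_gen_inverse n (Suc j)) (phi_gen n (Suc j)) = gm_one n"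
proof (rule scalar_outside_eqI[OF _ scalar_outside_gm_one])
  show "scalar_outside n {j, Suc j} (gr_one n) (gm_mult n (phi_gen_inverse n (Suc j)) (phi_gen n (Suc j)))"
    using scalar_outside_gm_mult[OF scalar_outside_phi_gen_inverse scalar_outside_phi_gen]
    by (simp add: gr_mult_gr_of gr_one_def)
next
  fix k l assume k: "k \<in> {j, Suc j}" and l: "l \<in> {j, Suc j}"
  have W: "{j, Suc j} \<subseteq> {..<n}" using j by auto
  from k l show "gm_mult n (phi_gen_inverse n (Suc j)) (phi_gen n (Suc j)) k l = gm_one n k l"
    unfolding gm_mult_entry_window[OF W scalar_outside_phi_gen_inverse k] using j
    by (auto simp: phi_gen_entries phi_gen_inverse_entries gr_mult_diff_left gr_mult_diff_right
        gr_mult_gr_of group_FB_simps gm_one_def gr_one_def gr_zero_eq)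
qed

lemma gm_wf_phi_gen: "gm_wf n (phi_gen n (Suc j))"
  by (rule gm_wfI) (auto simp: phi_gen_entries intro!: in_ZFB_gr_of in_ZFB_diff)

lemma gm_wf_phi_gen_inverse: "gm_wf n (phi_gen_inverse n (Suc j))"
  by (rule gm_wfI) (auto simp: phi_gen_inverse_entries intro!: in_ZFB_gr_of in_ZFB_diff)

lemma phi_gen_inv_eq: "phi_gen_inv n (Suc j) = phi_gen_inverse n (Suc j)"
  unfolding phi_gen_inv_def
proof (rule the_equality)
  show "gm_wf n (phi_gen_inverse n (Suc j)) \<and> gm_mult n (phi_gen n (Suc j)) (phi_gen_inverse n (Suc j)) = gm_one n
        \<and> gm_mult n (phi_gen_inverse n (Suc j)) (phi_gen n (Suc j)) = gm_one n"
    by (simp add: gm_wf_phi_gen_inverse phi_gen_mult_inverse phi_gen_inverse_mult)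
next
  fix M
  assume M: "gm_wf n M \<and> gm_mult n (phi_gen n (Suc j)) M = gm_one n
               \<and> gm_mult n M (phi_gen n (Suc j)) = gm_one n"
  have "M = gm_mult n (gm_mult n (phi_gen_inverse n (Suc j)) (phi_gen n (Suc j))) M"
    using M by (simp add: phi_gen_inverse_mult gm_mult_one_left)
  also have "\<dots> = gm_mult n (phi_gen_inverse n (Suc j)) (gm_mult n (phi_gen n (Suc j)) M)"
    using M by (intro gm_mult_assoc gm_wf_phi_gen_inverse gm_wf_phi_gen) simp
  also have "\<dots> = phi_gen_inverse n (Suc j)"
    using M by (simp add: gm_mult_one_right gm_wf_phi_gen_inverse)
  finally show "M = phi_gen_inverse n (Suc j)" .
qed

end

text \<open>The braid relation for consecutive \<open>\<phi>(\<sigma>\<^sub>i)\<close> is checked entrywise on the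
  \<open>3 \<times> 3\<close> window where they are not scalar: every entry is normalised by moving the
  \<open>\<sigma>\<close>'s to the left with the relations of \<open>F\<^sub>n \<rtimes> B\<^sub>n\<close> (in inverted and
  right-extended forms as well).\<close>
context
  fixes n j :: nat
  assumes j: "j + 3 \<le> n"
begin

interpretation G: group "FB n" by (rule group_FB)

abbreviation (input) "\<sigma>1 \<equiv> \<sigma> n (Suc j)"
abbreviation (input) "\<sigma>2 \<equiv> \<sigma> n (Suc (Suc j))"
abbreviation (input) "\<g>1 \<equiv> \<g> n (Suc j)"
abbreviation (input) "\<g>2 \<equiv> \<g> n (Suc (Suc j))"
abbreviation (input) "\<g>3 \<equiv> \<g> n (Suc (Suc (Suc j)))"

lemma braid_window_in_carrier [simp]:
  "\<sigma>1 \<in> carrier (FB n)" "\<sigma>2 \<in> carrier (FB n)"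
  "\<g>1 \<in> carrier (FB n)" "\<g>2 \<in> carrier (FB n)" "\<g>3 \<in> carrier (FB n)"
  using j by auto

lemma \<g>2_\<sigma>1: "\<g>2 \<otimes>\<^bsub>FB n\<^esub> \<sigma>1 = \<sigma>1 \<otimes>\<^bsub>FB n\<^esub> \<g>1"
  using \<g>_Suc_\<sigma>[of "Suc j" n] j by simp

lemma \<g>1_\<sigma>1: "\<g>1 \<otimes>\<^bsub>FB n\<^esub> \<sigma>1 = \<sigma>1 \<otimes>\<^bsub>FB n\<^esub> (\<g>1 \<otimes>\<^bsub>FB n\<^esub> (\<g>2 \<otimes>\<^bsub>FB n\<^esub> inv\<^bsub>FB n\<^esub> \<g>1))"
  using \<g>_\<sigma>[of "Suc j" n] j by (simp add: G.m_assoc)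

lemma \<g>3_\<sigma>2: "\<g>3 \<otimes>\<^bsub>FB n\<^esub> \<sigma>2 = \<sigma>2 \<otimes>\<^bsub>FB n\<^esub> \<g>2"
  using \<g>_Suc_\<sigma>[of "Suc (Suc j)" n] j by simp

lemma \<g>2_\<sigma>2: "\<g>2 \<otimes>\<^bsub>FB n\<^esub> \<sigma>2 = \<sigma>2 \<otimes>\<^bsub>FB n\<^esub> (\<g>2 \<otimes>\<^bsub>FB n\<^esub> (\<g>3 \<otimes>\<^bsub>FB n\<^esub> inv\<^bsub>FB n\<^esub> \<g>2))"
  using \<g>_\<sigma>[of "Suc (Suc j)" n] j by (simp add: G.m_assoc)

lemma \<g>1_\<sigma>2: "\<g>1 \<otimes>\<^bsub>FB n\<^esub> \<sigma>2 = \<sigma>2 \<otimes>\<^bsub>FB n\<^esub> \<g>1"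
  using \<g>_\<sigma>_commute[of "Suc (Suc j)" n "Suc j"] j by simp

lemma \<g>3_\<sigma>1: "\<g>3 \<otimes>\<^bsub>FB n\<^esub> \<sigma>1 = \<sigma>1 \<otimes>\<^bsub>FB n\<^esub> \<g>3"
  using \<g>_\<sigma>_commute[of "Suc j" n "Suc (Suc (Suc j))"] j by simp

lemma \<sigma>2_\<sigma>1_\<sigma>2: "\<sigma>2 \<otimes>\<^bsub>FB n\<^esub> (\<sigma>1 \<otimes>\<^bsub>FB n\<^esub> \<sigma>2) = \<sigma>1 \<otimes>\<^bsub>FB n\<^esub> (\<sigma>2 \<otimes>\<^bsub>FB n\<^esub> \<sigma>1)"
  using \<sigma>_braid[of "Suc j" n] j by (simp add: G.m_assoc)

lemma inv_\<g>1_\<sigma>1: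
  "inv\<^bsub>FB n\<^esub> \<g>1 \<otimes>\<^bsub>FB n\<^esub> \<sigma>1
   = \<sigma>1 \<otimes>\<^bsub>FB n\<^esub> (\<g>1 \<otimes>\<^bsub>FB n\<^esub> (inv\<^bsub>FB n\<^esub> \<g>2 \<otimes>\<^bsub>FB n\<^esub> inv\<^bsub>FB n\<^esub> \<g>1))"
proof -
  have "inv\<^bsub>FB n\<^esub> \<g>1 \<otimes>\<^bsub>FB n\<^esub> \<sigma>1
      = \<sigma>1 \<otimes>\<^bsub>FB n\<^esub> inv\<^bsub>FB n\<^esub> (\<g>1 \<otimes>\<^bsub>FB n\<^esub> (\<g>2 \<otimes>\<^bsub>FB n\<^esub> inv\<^bsub>FB n\<^esub> \<g>1))"
    by (rule G.intertwine_inv) (simp_all add: \<g>1_\<sigma>1)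
  then show ?thesis by (simp add: G.inv_mult_group G.m_assoc)
qed

lemma inv_\<g>2_\<sigma>2:
  "inv\<^bsub>FB n\<^esub> \<g>2 \<otimes>\<^bsub>FB n\<^esub> \<sigma>2
   = \<sigma>2 \<otimes>\<^bsub>FB n\<^esub> (\<g>2 \<otimes>\<^bsub>FB n\<^esub> (inv\<^bsub>FB n\<^esub> \<g>3 \<otimes>\<^bsub>FB n\<^esub> inv\<^bsub>FB n\<^esub> \<g>2))"
proof -
  have "inv\<^bsub>FB n\<^esub> \<g>2 \<otimes>\<^bsub>FB n\<^esub> \<sigma>2
      = \<sigma>2 \<otimes>\<^bsub>FB n\<^esub> inv\<^bsub>FB n\<^esub> (\<g>2 \<otimes>\<^bsub>FB n\<^esub> (\<g>3 \<otimes>\<^bsub>FB n\<^esub> inv\<^bsub>FB n\<^esub> \<g>2))"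
    by (rule G.intertwine_inv) (simp_all add: \<g>2_\<sigma>2)
  then show ?thesis by (simp add: G.inv_mult_group G.m_assoc)
qed

lemmas braid_window_rels =
  \<g>2_\<sigma>1 \<g>1_\<sigma>1 \<g>3_\<sigma>2 \<g>2_\<sigma>2 \<g>1_\<sigma>2 \<g>3_\<sigma>1 inv_\<g>1_\<sigma>1 inv_\<g>2_\<sigma>2
  G.intertwine_inv[OF _ _ _ \<g>2_\<sigma>1, simplified] G.intertwine_inv[OF _ _ _ \<g>3_\<sigma>2, simplified]
  G.intertwine_inv[OF _ _ _ \<g>1_\<sigma>2, simplified] G.intertwine_inv[OF _ _ _ \<g>3_\<sigma>1, simplified]

lemma braid_window_rels_tail:
  "t \<in> carrier (FB n) \<Longrightarrow> \<sigma>2 \<otimes>\<^bsub>FB n\<^esub> (\<sigma>1 \<otimes>\<^bsub>FB n\<^esub> (\<sigma>2 \<otimes>\<^bsub>FB n\<^esub> t))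
     = \<sigma>1 \<otimes>\<^bsub>FB n\<^esub> (\<sigma>2 \<otimes>\<^bsub>FB n\<^esub> (\<sigma>1 \<otimes>\<^bsub>FB n\<^esub> t))"
  using \<sigma>2_\<sigma>1_\<sigma>2 by (simp add: G.m_assoc[symmetric])

lemma phi_gen_braid_window:
  "gm_mult n (gm_mult n (phi_gen n (Suc j)) (phi_gen n (Suc (Suc j)))) (phi_gen n (Suc j))
   = gm_mult n (gm_mult n (phi_gen n (Suc (Suc j))) (phi_gen n (Suc j))) (phi_gen n (Suc (Suc j)))"
proof -
  let ?W = "{j, Suc j, Suc (Suc j)}"
  have W: "?W \<subseteq> {..<n}" using j by auto
  have P: "scalar_outside n ?W (gr_of \<sigma>1) (phi_gen n (Suc j))"
    by (rule scalar_outside_mono[OF scalar_outside_phi_gen]) (use j in auto)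
  have Q: "scalar_outside n ?W (gr_of \<sigma>2) (phi_gen n (Suc (Suc j)))"
    by (rule scalar_outside_mono[OF scalar_outside_phi_gen[of "Suc j" n]]) (use j in auto)
  have j2: "Suc j + 2 \<le> n" "j + 2 \<le> n" using j by auto
  show ?thesis
  proof (rule scalar_outside_eqI)
    show "scalar_outside n ?W (gr_of (\<sigma>1 \<otimes>\<^bsub>FB n\<^esub> (\<sigma>2 \<otimes>\<^bsub>FB n\<^esub> \<sigma>1)))
        (gm_mult n (gm_mult n (phi_gen n (Suc j)) (phi_gen n (Suc (Suc j)))) (phi_gen n (Suc j)))"
      using scalar_outside_gm_mult[OF scalar_outside_gm_mult[OF P Q] P]
      by (simp add: gr_mult_gr_of G.m_assoc)
    show "scalar_outside n ?W (gr_of (\<sigma>1 \<otimes>\<^bsub>FB n\<^esub> (\<sigma>2 \<otimes>\<^bsub>FB n\<^esub> \<sigma>1)))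
        (gm_mult n (gm_mult n (phi_gen n (Suc (Suc j))) (phi_gen n (Suc j))) (phi_gen n (Suc (Suc j))))"
      using scalar_outside_gm_mult[OF scalar_outside_gm_mult[OF Q P] Q]
      by (simp add: gr_mult_gr_of G.m_assoc \<sigma>2_\<sigma>1_\<sigma>2)
  next
    fix k l assume k: "k \<in> ?W" and l: "l \<in> ?W"
    then show "gm_mult n (gm_mult n (phi_gen n (Suc j)) (phi_gen n (Suc (Suc j)))) (phi_gen n (Suc j)) k l
        = gm_mult n (gm_mult n (phi_gen n (Suc (Suc j))) (phi_gen n (Suc j))) (phi_gen n (Suc (Suc j))) k l"
      unfolding gm_mult_entry_window[OF W scalar_outside_gm_mult[OF P Q] k]
        gm_mult_entry_window[OF W scalar_outside_gm_mult[OF Q P] k]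
        gm_mult_entry_window[OF W P k] gm_mult_entry_window[OF W Q k]
      using j
      by (elim insertE emptyE)
        (simp_all add: phi_gen_entries[OF j2(1)] phi_gen_entries[OF j2(2)] gr_mult_diff_left
          gr_mult_diff_right gr_mult_add_left gr_mult_add_right gr_mult_gr_of fin_supp_diff
          fin_supp_add fin_supp_mult group_FB_simps braid_window_rels
          braid_window_rels[THEN G.m_assoc_tail] braid_window_rels_tail \<sigma>2_\<sigma>1_\<sigma>2)
  qed
qed

end

context
  fixes n a b :: nat
  assumes ab: "a + 2 \<le> b" and bn: "b + 2 \<le> n"
begin

interpretation G: group "FB n" by (rule group_FB)

lemma far_window_rels:
  "\<sigma> n (Suc b) \<otimes>\<^bsub>FB n\<^esub> \<sigma> n (Suc a) = \<sigma> n (Suc a) \<otimes>\<^bsub>FB n\<^esub> \<sigma> n (Suc b)"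
  "\<g> n (Suc a) \<otimes>\<^bsub>FB n\<^esub> \<sigma> n (Suc b) = \<sigma> n (Suc b) \<otimes>\<^bsub>FB n\<^esub> \<g> n (Suc a)"
  "\<g> n (Suc b) \<otimes>\<^bsub>FB n\<^esub> \<sigma> n (Suc a) = \<sigma> n (Suc a) \<otimes>\<^bsub>FB n\<^esub> \<g> n (Suc b)"
  using \<sigma>_far_commute[of "Suc b" n "Suc a"] \<g>_\<sigma>_commute[of "Suc b" n "Suc a"]
    \<g>_\<sigma>_commute[of "Suc a" n "Suc b"] ab bn
  by simp_all

lemma phi_gen_far_window:
  "gm_mult n (phi_gen n (Suc a)) (phi_gen n (Suc b)) = gm_mult n (phi_gen n (Suc b)) (phi_gen n (Suc a))"
proof -
  let ?W = "{a, Suc a, b, Suc b}"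
  have W: "?W \<subseteq> {..<n}" using ab bn by auto
  have P: "scalar_outside n ?W (gr_of (\<sigma> n (Suc a))) (phi_gen n (Suc a))"
    by (rule scalar_outside_mono[OF scalar_outside_phi_gen[of a n]]) (use ab bn in auto)
  have Q: "scalar_outside n ?W (gr_of (\<sigma> n (Suc b))) (phi_gen n (Suc b))"
    by (rule scalar_outside_mono[OF scalar_outside_phi_gen[of b n]]) (use ab bn in auto)
  have j2: "a + 2 \<le> n" "b + 2 \<le> n" using ab bn by auto
  have c: "\<sigma> n (Suc a) \<in> carrier (FB n)" "\<sigma> n (Suc b) \<in> carrier (FB n)"
    "\<g> n (Suc a) \<in> carrier (FB n)" "\<g> n (Suc b) \<in> carrier (FB n)"
    using ab bn by auto
  show ?thesis
  proof (rule scalar_outside_eqI)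
    show "scalar_outside n ?W (gr_of (\<sigma> n (Suc a) \<otimes>\<^bsub>FB n\<^esub> \<sigma> n (Suc b)))
        (gm_mult n (phi_gen n (Suc a)) (phi_gen n (Suc b)))"
      using scalar_outside_gm_mult[OF P Q] by (simp add: gr_mult_gr_of)
    show "scalar_outside n ?W (gr_of (\<sigma> n (Suc a) \<otimes>\<^bsub>FB n\<^esub> \<sigma> n (Suc b)))
        (gm_mult n (phi_gen n (Suc b)) (phi_gen n (Suc a)))"
      using scalar_outside_gm_mult[OF Q P] by (simp add: gr_mult_gr_of far_window_rels)
  next
    fix k l assume k: "k \<in> ?W" and l: "l \<in> ?W"
    then show "gm_mult n (phi_gen n (Suc a)) (phi_gen n (Suc b)) k l
        = gm_mult n (phi_gen n (Suc b)) (phi_gen n (Suc a)) k l"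
      unfolding gm_mult_entry_window[OF W P k] gm_mult_entry_window[OF W Q k]
      using ab bn c
      by (elim insertE emptyE)
        (simp_all add: phi_gen_entries[OF j2(1)] phi_gen_entries[OF j2(2)] gr_mult_diff_left
          gr_mult_diff_right gr_mult_gr_of fin_supp_diff fin_supp_mult G.m_assoc far_window_rels
          far_window_rels[THEN G.m_assoc_tail])
  qed
qed

end

lemma \<sigma>_index_cases:
  assumes "1 \<le> i" "i \<le> n - 1"
  obtains j where "i = Suc j" "j + 2 \<le> n"
  using assms by (cases i) auto

lemma phi_gen_far_commute:
  assumes "1 \<le> i" "i \<le> n - 1" "1 \<le> k" "k \<le> n - 1" "i + 1 < k"
  shows "gm_mult n (phi_gen n i) (phi_gen n k) = gm_mult n (phi_gen n k) (phi_gen n i)"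
  using phi_gen_far_window[of "i - 1" "k - 1" n] assms by simp

lemma phi_gen_braid:
  assumes "1 \<le> i" "i + 1 \<le> n - 1"
  shows "gm_mult n (phi_gen n i) (gm_mult n (phi_gen n (i + 1)) (phi_gen n i))
       = gm_mult n (phi_gen n (i + 1)) (gm_mult n (phi_gen n i) (phi_gen n (i + 1)))"
proof -
  obtain j where i: "i = Suc j" and j: "j + 3 \<le> n" using assms by (cases i) auto
  have "gm_wf n (phi_gen n i)" "gm_wf n (phi_gen n (i + 1))"
    using gm_wf_phi_gen[of j n] gm_wf_phi_gen[of "Suc j" n] i j by auto
  then show ?thesis
    using phi_gen_braid_window[OF j] i by (simp add: gm_mult_assoc)
qed

lemma gens_cases:
  assumes "x \<in> gens n"
  obtains j where "x = s (Suc j)" "j + 2 \<le> n" | i where "x = g i"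
proof (cases x)
  case (s i)
  then have "1 \<le> i" "i \<le> n - 1" using assms by auto
  with s that(1) show ?thesis by (cases i) auto
next
  case (g i)
  with that(2) show ?thesis .
qed

lemma gm_wf_phi_letter:
  assumes "fst a \<in> gens n"
  shows "gm_wf n (phi_letter n a)"
proof -
  obtain x b where a: "a = (x, b)" by force
  from assms show ?thesis
    unfolding a by (cases b) (auto elim!: gens_cases
      simp: phi_gen_inv_eq gm_wf_phi_gen gm_wf_phi_gen_inverse gm_wf_one)
qed

lemma phi_word_Cons: "phi_word n (a # w) = gm_mult n (phi_letter n a) (phi_word n w)"
  by (simp add: phi_word_def)

lemma phi_word_Nil: "phi_word n [] = gm_one n"
  by (simp add: phi_word_def)

lemma gm_wf_phi_word: "w \<in> lists (gens n \<times> UNIV) \<Longrightarrow> gm_wf n (phi_word n w)"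
  by (induction w) (auto simp: phi_word_Nil phi_word_Cons gm_wf_one gm_wf_mult gm_wf_phi_letter)

lemma phi_word_append:
  "u \<in> lists (gens n \<times> UNIV) \<Longrightarrow> v \<in> lists (gens n \<times> UNIV) \<Longrightarrow>
   phi_word n (u @ v) = gm_mult n (phi_word n u) (phi_word n v)"
proof (induction u)
  case Nil
  then show ?case by (simp add: phi_word_Nil gm_mult_one_left gm_wf_phi_word)
next
  case (Cons a u)
  then have "gm_wf n (phi_letter n a)" "gm_wf n (phi_word n u)" "gm_wf n (phi_word n v)"
    by (auto intro: gm_wf_phi_letter gm_wf_phi_word simp: mem_Times_iff)
  with Cons show ?case by (simp add: phi_word_Cons gm_mult_assoc)
qed

lemma phi_word_cancel:
  "a \<in> gens n \<Longrightarrow> phi_word n [(a, b), (a, \<not> b)] = phi_word n []"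
  by (elim gens_cases; cases b)
    (simp_all add: phi_word_def phi_gen_inv_eq gm_mult_one_right gm_wf_phi_gen gm_wf_phi_gen_inverse
      phi_gen_mult_inverse phi_gen_inverse_mult gm_wf_one)

lemma phi_word_rels:
  assumes "(u, v) \<in> rels n"
  shows "phi_word n u = phi_word n v"
proof -
  have wf: "gm_wf n (phi_gen n i)" if i: "1 \<le> i" "i \<le> n - 1" for i
  proof -
    obtain j where "i = Suc j" "j + 2 \<le> n" using i by (rule \<sigma>_index_cases)
    then show ?thesis by (simp add: gm_wf_phi_gen)
  qed
  have g_letters:
    "phi_word n [(g j, False), (s i, False)] = phi_gen n i"
    "phi_word n [(s i, False), (g j, False)] = phi_gen n i"
    "phi_word n [(s i, False), (g j, False), (g k, False), (g j, True)] = phi_gen n i"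
    if "1 \<le> i" "i \<le> n - 1" for i j k
    using wf[OF that] by (simp_all add: phi_word_def gm_mult_one_left gm_mult_one_right gm_wf_one)
  from assms show ?thesis
    unfolding rels_def
  proof (elim UnE CollectE exE conjE)
    fix i k
    assume uv: "(u, v) = ([(s i, False), (s k, False)], [(s k, False), (s i, False)])"
      and c: "1 \<le> i" "i \<le> n - 1" "1 \<le> k" "k \<le> n - 1" "i + 1 < k \<or> k + 1 < i"
    then show ?thesis
      using phi_gen_far_commute[of i n k] phi_gen_far_commute[of k n i] wf[of i] wf[of k]
      by (auto simp: phi_word_def gm_mult_one_right)
  next
    fix i k
    assume uv: "(u, v) = ([(s i, False), (s k, False), (s i, False)], [(s k, False), (s i, False), (s k, False)])"
      and c: "1 \<le> i" "i \<le> n - 1" "1 \<le> k" "k \<le> n - 1" "i = k + 1 \<or> k = i + 1"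
    then show ?thesis
      using phi_gen_braid[of i n] phi_gen_braid[of k n] wf[of i] wf[of k]
      by (auto simp: phi_word_def gm_mult_one_right)
  qed (auto simp: g_letters)
qed

lemma phi_word_pres_rel: "(u, v) \<in> pres_rel (gens n) (rels n) \<Longrightarrow> phi_word n u = phi_word n v"
proof (induction rule: pres_rel.induct)
  case (cancel a b)
  then show ?case by (rule phi_word_cancel)
next
  case (rel u v)
  from rel(1) show ?case by (rule phi_word_rels)
next
  case (cong u v u' v')
  then show ?case
    using pres_rel_in_lists[OF cong.hyps(1)] pres_rel_in_lists[OF cong.hyps(2)]
    by (simp add: phi_word_append)
qed simp_all

abbreviation braid_letters :: "nat \<Rightarrow> gen set" where
  "braid_letters n \<equiv> {s i | i. 1 \<le> i \<and> i \<le> n - 1}"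

lemma braid_word_in_lists: "w \<in> lists (braid_letters n \<times> UNIV) \<Longrightarrow> w \<in> lists (gens n \<times> UNIV)"
  by (induction w) auto

lemma braid_sub_word:
  "\<beta> \<in> braid_sub n \<Longrightarrow> \<exists>w. w \<in> lists (braid_letters n \<times> UNIV) \<and> fb_class n w = \<beta>"
  unfolding braid_sub_def
proof (induction rule: generate.induct)
  case one
  then show ?case by (intro exI[of _ "[]"]) (simp add: one_FB)
next
  case (incl h)
  then obtain i where "h = \<sigma> n i" "1 \<le> i" "i \<le> n - 1" by blast
  then show ?case by (intro exI[of _ "[(s i, False)]"]) (auto simp: elem_def)
next
  case (inv h)
  then obtain i where "h = \<sigma> n i" "1 \<le> i" "i \<le> n - 1" by blast
  then show ?case by (intro exI[of _ "[(s i, True)]"]) (auto simp: inv_elem)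
next
  case (eng h1 h2)
  then obtain w1 w2 where "w1 \<in> lists (braid_letters n \<times> UNIV)" "fb_class n w1 = h1"
    "w2 \<in> lists (braid_letters n \<times> UNIV)" "fb_class n w2 = h2"
    by blast
  then show ?case
    by (intro exI[of _ "w1 @ w2"]) (auto simp: mult_FB[symmetric] braid_word_in_lists)
qed

lemma phi_fb_class:
  assumes w: "w \<in> lists (braid_letters n \<times> UNIV)"
  shows "phi n (fb_class n w) = phi_word n w"
proof -
  define w' where "w' = (SOME w'. w' \<in> lists (braid_letters n \<times> UNIV) \<and> fb_class n w' = fb_class n w)"
  have "w' \<in> lists (braid_letters n \<times> UNIV) \<and> fb_class n w' = fb_class n w"
    unfolding w'_def by (rule someI[of _ w]) (use w in simp)
  then have "(w', w) \<in> pres_rel (gens n) (rels n)"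
    using pres_class_eq_iff[OF braid_word_in_lists braid_word_in_lists[OF w]] by blast
  then have "phi_word n w' = phi_word n w" by (rule phi_word_pres_rel)
  then show ?thesis unfolding phi_def w'_def[symmetric] .
qed

lemma gm_wf_phi: "\<beta> \<in> braid_sub n \<Longrightarrow> gm_wf n (phi n \<beta>)"
proof -
  assume "\<beta> \<in> braid_sub n"
  then obtain w where w: "w \<in> lists (braid_letters n \<times> UNIV)" and \<beta>: "fb_class n w = \<beta>"
    using braid_sub_word by blast
  show ?thesis
    unfolding \<beta>[symmetric] phi_fb_class[OF w] by (rule gm_wf_phi_word[OF braid_word_in_lists[OF w]])
qed

lemma phi_mult:
  assumes "\<beta>1 \<in> braid_sub n" "\<beta>2 \<in> braid_sub n"
  shows "phi n (\<beta>1 \<otimes>\<^bsub>FB n\<^esub> \<beta>2) = gm_mult n (phi n \<beta>1) (phi n \<beta>2)"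
proof -
  obtain w1 w2 where w1: "w1 \<in> lists (braid_letters n \<times> UNIV)" "fb_class n w1 = \<beta>1"
    and w2: "w2 \<in> lists (braid_letters n \<times> UNIV)" "fb_class n w2 = \<beta>2"
    using braid_sub_word assms by blast
  have w12: "w1 @ w2 \<in> lists (braid_letters n \<times> UNIV)"
    using w1 w2 by simp
  have "phi n (\<beta>1 \<otimes>\<^bsub>FB n\<^esub> \<beta>2) = phi n (fb_class n (w1 @ w2))"
    using w1 w2 mult_FB[OF braid_word_in_lists braid_word_in_lists, of w1 n w2] by simp
  also have "\<dots> = gm_mult n (phi_word n w1) (phi_word n w2)"
    unfolding phi_fb_class[OF w12]
    by (rule phi_word_append[OF braid_word_in_lists[OF w1(1)] braid_word_in_lists[OF w2(1)]])
  also have "\<dots> = gm_mult n (phi n \<beta>1) (phi n \<beta>2)"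
    using phi_fb_class[OF w1(1)] phi_fb_class[OF w2(1)] w1(2) w2(2) by simp
  finally show ?thesis .
qed

lemma phi_one: "phi n \<one>\<^bsub>FB n\<^esub> = gm_one n"
  using phi_fb_class[of "[]" n] by (simp add: one_FB phi_word_Nil)

section \<open>The entries of \<open>\<phi>(\<beta>)\<close> lie in \<open>\<int>[F\<^sub>n \<beta>]\<close>\<close>

context
  fixes n :: nat
begin

interpretation G: group "FB n" by (rule group_FB)

lemma free_gens_subset: "{\<g> n i | i. 1 \<le> i \<and> i \<le> n} \<subseteq> carrier (FB n)"
  by auto

lemma subgroup_free_sub: "subgroup (free_sub n) (FB n)"
  unfolding free_sub_def by (rule G.generate_is_subgroup[OF free_gens_subset])

lemma \<g>_in_free_sub: "1 \<le> i \<Longrightarrow> i \<le> n \<Longrightarrow> \<g> n i \<in> free_sub n"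
  unfolding free_sub_def by (rule generate.incl) blast

lemmas free_sub_closed = subgroup.m_closed[OF subgroup_free_sub] subgroup.m_inv_closed[OF subgroup_free_sub]
  \<g>_in_free_sub

lemma conj_free_sub_closed:
  assumes x: "x \<in> carrier (FB n)"
    and gens: "\<And>i. 1 \<le> i \<Longrightarrow> i \<le> n \<Longrightarrow> x \<otimes>\<^bsub>FB n\<^esub> \<g> n i \<otimes>\<^bsub>FB n\<^esub> inv\<^bsub>FB n\<^esub> x \<in> free_sub n"
    and f: "f \<in> free_sub n"
  shows "x \<otimes>\<^bsub>FB n\<^esub> f \<otimes>\<^bsub>FB n\<^esub> inv\<^bsub>FB n\<^esub> x \<in> free_sub n"
  using G.conj_generate_closed[OF free_gens_subset x _ f[unfolded free_sub_def]] gens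
  unfolding free_sub_def by blast

context
  fixes i :: nat
  assumes i: "1 \<le> i" "i \<le> n - 1"
begin

lemma \<sigma>_window_in_carrier [simp]:
  "\<sigma> n i \<in> carrier (FB n)" "\<g> n i \<in> carrier (FB n)" "\<g> n (Suc i) \<in> carrier (FB n)"
  using i by auto

lemma \<g>_\<sigma>_conj:
  "\<g> n (Suc i) \<otimes>\<^bsub>FB n\<^esub> (\<sigma> n i \<otimes>\<^bsub>FB n\<^esub> \<g> n (Suc i))
   = \<g> n i \<otimes>\<^bsub>FB n\<^esub> (\<g> n (Suc i) \<otimes>\<^bsub>FB n\<^esub> \<sigma> n i)"
proof -
  have g_Suc: "\<g> n (Suc i) \<otimes>\<^bsub>FB n\<^esub> \<sigma> n i = \<sigma> n i \<otimes>\<^bsub>FB n\<^esub> \<g> n i"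
    using \<g>_Suc_\<sigma>[OF i] by simp
  have g: "\<g> n i \<otimes>\<^bsub>FB n\<^esub> \<sigma> n i
      = \<sigma> n i \<otimes>\<^bsub>FB n\<^esub> (\<g> n i \<otimes>\<^bsub>FB n\<^esub> (\<g> n (Suc i) \<otimes>\<^bsub>FB n\<^esub> inv\<^bsub>FB n\<^esub> \<g> n i))"
    using \<g>_\<sigma>[OF i] by (simp add: G.m_assoc)
  have "\<g> n (Suc i) \<otimes>\<^bsub>FB n\<^esub> (\<sigma> n i \<otimes>\<^bsub>FB n\<^esub> \<g> n (Suc i))
      = \<sigma> n i \<otimes>\<^bsub>FB n\<^esub> (\<g> n i \<otimes>\<^bsub>FB n\<^esub> \<g> n (Suc i))"
    by (simp add: g_Suc G.m_assoc[symmetric])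
  also have "\<dots> = (\<g> n i \<otimes>\<^bsub>FB n\<^esub> \<sigma> n i) \<otimes>\<^bsub>FB n\<^esub> \<g> n i"
    by (simp add: g G.m_assoc G.inv_mult_cancel_left)
  also have "\<dots> = \<g> n i \<otimes>\<^bsub>FB n\<^esub> (\<g> n (Suc i) \<otimes>\<^bsub>FB n\<^esub> \<sigma> n i)"
    by (simp add: g_Suc G.m_assoc)
  finally show ?thesis .
qed

lemma \<sigma>_conj_free_sub:
  "f \<in> free_sub n \<Longrightarrow> \<sigma> n i \<otimes>\<^bsub>FB n\<^esub> f \<otimes>\<^bsub>FB n\<^esub> inv\<^bsub>FB n\<^esub> \<sigma> n i \<in> free_sub n"
proof (rule conj_free_sub_closed)
  fix k assume k: "1 \<le> k" "k \<le> n"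
  consider "k = i" | "k = Suc i" | "k \<noteq> i" "k \<noteq> i + 1" by linarith
  then show "\<sigma> n i \<otimes>\<^bsub>FB n\<^esub> \<g> n k \<otimes>\<^bsub>FB n\<^esub> inv\<^bsub>FB n\<^esub> \<sigma> n i \<in> free_sub n"
  proof cases
    case 1
    have "\<sigma> n i \<otimes>\<^bsub>FB n\<^esub> \<g> n i \<otimes>\<^bsub>FB n\<^esub> inv\<^bsub>FB n\<^esub> \<sigma> n i
        = \<g> n (Suc i) \<otimes>\<^bsub>FB n\<^esub> \<sigma> n i \<otimes>\<^bsub>FB n\<^esub> inv\<^bsub>FB n\<^esub> \<sigma> n i"
      using \<g>_Suc_\<sigma>[OF i] by simp
    also have "\<dots> = \<g> n (Suc i)"
      by (simp add: G.m_assoc)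
    finally show ?thesis using 1 i by (simp add: free_sub_closed)
  next
    case 2
    have "\<sigma> n i \<otimes>\<^bsub>FB n\<^esub> \<g> n (Suc i) \<otimes>\<^bsub>FB n\<^esub> inv\<^bsub>FB n\<^esub> \<sigma> n i
        = inv\<^bsub>FB n\<^esub> \<g> n (Suc i) \<otimes>\<^bsub>FB n\<^esub> (\<g> n (Suc i) \<otimes>\<^bsub>FB n\<^esub> (\<sigma> n i \<otimes>\<^bsub>FB n\<^esub> \<g> n (Suc i)))
          \<otimes>\<^bsub>FB n\<^esub> inv\<^bsub>FB n\<^esub> \<sigma> n i"
      by (simp add: G.m_assoc G.inv_mult_cancel_left)
    also have "\<dots> = inv\<^bsub>FB n\<^esub> \<g> n (Suc i) \<otimes>\<^bsub>FB n\<^esub> (\<g> n i \<otimes>\<^bsub>FB n\<^esub> \<g> n (Suc i))"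
      by (simp add: \<g>_\<sigma>_conj G.m_assoc)
    finally show ?thesis using 2 i by (simp add: free_sub_closed)
  next
    case 3
    then have "\<g> n k \<otimes>\<^bsub>FB n\<^esub> \<sigma> n i = \<sigma> n i \<otimes>\<^bsub>FB n\<^esub> \<g> n k"
      using \<g>_\<sigma>_commute[OF i k] by blast
    then have "\<sigma> n i \<otimes>\<^bsub>FB n\<^esub> \<g> n k \<otimes>\<^bsub>FB n\<^esub> inv\<^bsub>FB n\<^esub> \<sigma> n i
        = \<g> n k \<otimes>\<^bsub>FB n\<^esub> \<sigma> n i \<otimes>\<^bsub>FB n\<^esub> inv\<^bsub>FB n\<^esub> \<sigma> n i"
      by simp
    also have "\<dots> = \<g> n k"
      using k by (simp add: G.m_assoc)
    finally show ?thesis using k by (simp add: free_sub_closed)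
  qed
qed simp

lemma inv_\<sigma>_conj_free_sub:
  "f \<in> free_sub n \<Longrightarrow>
   inv\<^bsub>FB n\<^esub> \<sigma> n i \<otimes>\<^bsub>FB n\<^esub> f \<otimes>\<^bsub>FB n\<^esub> inv\<^bsub>FB n\<^esub> (inv\<^bsub>FB n\<^esub> \<sigma> n i) \<in> free_sub n"
proof (rule conj_free_sub_closed)
  fix k assume k: "1 \<le> k" "k \<le> n"
  consider "k = i" | "k = Suc i" | "k \<noteq> i" "k \<noteq> i + 1" by linarith
  then show "inv\<^bsub>FB n\<^esub> \<sigma> n i \<otimes>\<^bsub>FB n\<^esub> \<g> n k \<otimes>\<^bsub>FB n\<^esub> inv\<^bsub>FB n\<^esub> (inv\<^bsub>FB n\<^esub> \<sigma> n i)
      \<in> free_sub n"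
  proof cases
    case 1
    have "inv\<^bsub>FB n\<^esub> \<sigma> n i \<otimes>\<^bsub>FB n\<^esub> \<g> n i \<otimes>\<^bsub>FB n\<^esub> inv\<^bsub>FB n\<^esub> (inv\<^bsub>FB n\<^esub> \<sigma> n i)
        = \<g> n i \<otimes>\<^bsub>FB n\<^esub> (\<g> n (Suc i) \<otimes>\<^bsub>FB n\<^esub> inv\<^bsub>FB n\<^esub> \<g> n i)"
      using \<g>_\<sigma>[OF i] by (simp add: G.m_assoc G.inv_mult_cancel_left)
    then show ?thesis using 1 i by (simp add: free_sub_closed)
  next
    case 2
    have "inv\<^bsub>FB n\<^esub> \<sigma> n i \<otimes>\<^bsub>FB n\<^esub> \<g> n (Suc i) \<otimes>\<^bsub>FB n\<^esub> inv\<^bsub>FB n\<^esub> (inv\<^bsub>FB n\<^esub> \<sigma> n i)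
        = \<g> n i"
      using \<g>_Suc_\<sigma>[OF i] by (simp add: G.m_assoc G.inv_mult_cancel_left)
    then show ?thesis using 2 i by (simp add: free_sub_closed)
  next
    case 3
    then have "\<g> n k \<otimes>\<^bsub>FB n\<^esub> \<sigma> n i = \<sigma> n i \<otimes>\<^bsub>FB n\<^esub> \<g> n k"
      using \<g>_\<sigma>_commute[OF i k] by blast
    then have "inv\<^bsub>FB n\<^esub> \<sigma> n i \<otimes>\<^bsub>FB n\<^esub> \<g> n k \<otimes>\<^bsub>FB n\<^esub> inv\<^bsub>FB n\<^esub> (inv\<^bsub>FB n\<^esub> \<sigma> n i)
        = \<g> n k"
      using k by (simp add: G.m_assoc G.inv_mult_cancel_left)
    then show ?thesis using k by (simp add: free_sub_closed)
  qed
qed simp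

end

lemma braid_letter_conj_free_sub:
  assumes a: "a \<in> braid_letters n \<times> UNIV" and f: "f \<in> free_sub n"
  shows "fb_class n [a] \<otimes>\<^bsub>FB n\<^esub> f \<otimes>\<^bsub>FB n\<^esub> inv\<^bsub>FB n\<^esub> fb_class n [a] \<in> free_sub n"
proof -
  obtain i b where a: "a = (s i, b)" and i: "1 \<le> i" "i \<le> n - 1" using a by blast
  show ?thesis
  proof (cases b)
    case False
    then show ?thesis using \<sigma>_conj_free_sub[OF i f] a by (simp add: elem_def)
  next
    case True
    then show ?thesis using inv_\<sigma>_conj_free_sub[OF i f] a i by (simp add: inv_elem)
  qed
qed

lemma in_free_coset_self: "a \<in> carrier (FB n) \<Longrightarrow> a \<in> free_sub n #>\<^bsub>FB n\<^esub> a"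
  by (rule G.rcos_self[OF _ subgroup_free_sub])

lemma in_free_coset: "f \<in> free_sub n \<Longrightarrow> a \<in> carrier (FB n) \<Longrightarrow> f \<otimes>\<^bsub>FB n\<^esub> a \<in> free_sub n #>\<^bsub>FB n\<^esub> a"
  by (rule G.rcosI[OF _ subgroup.subset[OF subgroup_free_sub]])

lemma phi_letter_supp:
  assumes a: "a \<in> braid_letters n \<times> UNIV"
  shows "gr_supp (phi_letter n a k l) \<subseteq> free_sub n #>\<^bsub>FB n\<^esub> fb_class n [a]"
proof -
  obtain i b where ab: "a = (s i, b)" and i: "1 \<le> i" "i \<le> n - 1"
    using a by blast
  obtain j where ij: "i = Suc j" and j: "j + 2 \<le> n"
    using i by (rule \<sigma>_index_cases)
  have a: "a = (s (Suc j), b)" using ab ij by simp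
  show ?thesis
  proof (cases b)
    case False
    then have "fb_class n [a] = \<sigma> n (Suc j)" using a by (simp add: elem_def)
    moreover have "\<sigma> n (Suc j) \<otimes>\<^bsub>FB n\<^esub> \<g> n (Suc j) \<in> free_sub n #>\<^bsub>FB n\<^esub> \<sigma> n (Suc j)"
      using \<g>_Suc_\<sigma>[of "Suc j" n] in_free_coset[of "\<g> n (Suc (Suc j))" "\<sigma> n (Suc j)"] j
      by (simp add: free_sub_closed)
    ultimately show ?thesis
      using a False j in_free_coset_self[of "\<sigma> n (Suc j)"]
        gr_supp_diff[of "gr_of (\<sigma> n (Suc j))" "gr_of (\<sigma> n (Suc j) \<otimes>\<^bsub>FB n\<^esub> \<g> n (Suc j))"]
      by (auto simp: phi_gen_entries)
  next
    case True
    then have "fb_class n [a] = inv\<^bsub>FB n\<^esub> \<sigma> n (Suc j)" using a j by (simp add: inv_elem)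
    moreover have "inv\<^bsub>FB n\<^esub> \<g> n (Suc j) \<otimes>\<^bsub>FB n\<^esub> inv\<^bsub>FB n\<^esub> \<sigma> n (Suc j)
        \<in> free_sub n #>\<^bsub>FB n\<^esub> inv\<^bsub>FB n\<^esub> \<sigma> n (Suc j)"
      using j by (intro in_free_coset) (simp_all add: free_sub_closed)
    ultimately show ?thesis
      using a True j in_free_coset_self[of "inv\<^bsub>FB n\<^esub> \<sigma> n (Suc j)"]
        gr_supp_diff[of "gr_of (inv\<^bsub>FB n\<^esub> \<sigma> n (Suc j))"
          "gr_of (inv\<^bsub>FB n\<^esub> \<g> n (Suc j) \<otimes>\<^bsub>FB n\<^esub> inv\<^bsub>FB n\<^esub> \<sigma> n (Suc j))"]
      by (auto simp: phi_gen_inv_eq phi_gen_inverse_entries)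
  qed
qed

lemma phi_word_supp:
  "w \<in> lists (braid_letters n \<times> UNIV) \<Longrightarrow>
   gr_supp (phi_word n w k l) \<subseteq> free_sub n #>\<^bsub>FB n\<^esub> fb_class n w"
proof (induction w arbitrary: k l)
  case Nil
  show ?case
    using in_free_coset_self[of "\<one>\<^bsub>FB n\<^esub>"]
    by (auto simp: phi_word_Nil gm_one_def gr_one_def one_FB[symmetric] gr_supp_def gr_zero_def gr_of_def)
next
  case (Cons a w)
  have a: "a \<in> braid_letters n \<times> UNIV" and w: "w \<in> lists (braid_letters n \<times> UNIV)"
    using Cons.prems by auto
  then have la: "[a] \<in> lists (gens n \<times> UNIV)" and lw: "w \<in> lists (gens n \<times> UNIV)"
    using braid_word_in_lists by auto
  have aw: "fb_class n (a # w) = fb_class n [a] \<otimes>\<^bsub>FB n\<^esub> fb_class n w"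
    using mult_FB[OF la lw] by simp
  have "gr_supp (phi_word n (a # w) k l)
      \<subseteq> (\<Union>m\<in>{..<n}. gr_supp (gr_mult n (phi_letter n a k m) (phi_word n w m l)))"
    unfolding phi_word_Cons gm_mult_entry by (rule gr_supp_sum)
  also have "\<dots> \<subseteq> free_sub n #>\<^bsub>FB n\<^esub> fb_class n (a # w)"
  proof (intro UN_least subsetI)
    fix m z assume "z \<in> gr_supp (gr_mult n (phi_letter n a k m) (phi_word n w m l))"
    then obtain x y where z: "z = x \<otimes>\<^bsub>FB n\<^esub> y"
      and "x \<in> gr_supp (phi_letter n a k m)" "y \<in> gr_supp (phi_word n w m l)"
      using gr_supp_mult by (fastforce simp: image_iff)
    then have x: "x \<in> free_sub n #>\<^bsub>FB n\<^esub> fb_class n [a]"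
      and y: "y \<in> free_sub n #>\<^bsub>FB n\<^esub> fb_class n w"
      using phi_letter_supp[OF a] Cons.IH[OF w] by blast+
    show "z \<in> free_sub n #>\<^bsub>FB n\<^esub> fb_class n (a # w)"
      unfolding z aw
      by (rule G.r_coset_mult_conj_closed[OF subgroup_free_sub _ _ braid_letter_conj_free_sub[OF a] x y])
        (simp_all add: fb_class_in_carrier[OF la] fb_class_in_carrier[OF lw])
  qed
  finally show ?case .
qed

lemma phi_in_group_ring:
  assumes G: "G \<subseteq> braid_sub n" and \<beta>: "\<beta> \<in> G"
  shows "in_group_ring (FnG n G) (phi n \<beta> k l)"
proof -
  obtain w where w: "w \<in> lists (braid_letters n \<times> UNIV)" "fb_class n w = \<beta>"
    using braid_sub_word G \<beta> by blast
  have "f \<otimes>\<^bsub>FB n\<^esub> \<beta> \<in> FnG n G" if "f \<in> free_sub n" for f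
    unfolding FnG_def using that \<beta> by (intro generate.eng generate.incl) auto
  then have "free_sub n #>\<^bsub>FB n\<^esub> \<beta> \<subseteq> FnG n G"
    unfolding r_coset_def by blast
  moreover have "fin_supp (phi n \<beta> k l)"
    using gm_wf_phi[of \<beta> n] G \<beta> by (auto dest: gm_wfD(1) in_ZFB_fin_supp)
  ultimately show ?thesis
    using phi_word_supp[OF w(1), of k l] phi_fb_class[OF w(1)] w(2)
    unfolding in_group_ring_def by auto
qed

end

section \<open>The representation \<open>\<rho>\<^sup>+\<close>\<close>

definition rho_entry :: "(gen word set \<Rightarrow> complex mat) \<Rightarrow> grelt \<Rightarrow> nat \<Rightarrow> nat \<Rightarrow> complex" where
  "rho_entry \<rho> x a b = (\<Sum>\<gamma>\<in>gr_supp x. of_int (x \<gamma>) * \<rho> \<gamma> $$ (a, b))"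

lemma index_rho_lin: "a < d \<Longrightarrow> b < d \<Longrightarrow> rho_lin d \<rho> x $$ (a, b) = rho_entry \<rho> x a b"
  by (simp add: rho_lin_def rho_entry_def)

lemma rho_entry_on_superset:
  assumes "finite S" "gr_supp x \<subseteq> S"
  shows "rho_entry \<rho> x a b = (\<Sum>\<gamma>\<in>S. of_int (x \<gamma>) * \<rho> \<gamma> $$ (a, b))"
  unfolding rho_entry_def by (rule sum.mono_neutral_left) (use assms in \<open>auto simp: gr_supp_def\<close>)

lemma rho_entry_zero [simp]: "rho_entry \<rho> 0 a b = 0"
  by (simp add: rho_entry_def)

lemma rho_entry_add:
  "fin_supp x \<Longrightarrow> fin_supp y \<Longrightarrow> rho_entry \<rho> (x + y) a b = rho_entry \<rho> x a b + rho_entry \<rho> y a b"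
  using rho_entry_on_superset[of "gr_supp x \<union> gr_supp y" "x + y"]
    rho_entry_on_superset[of "gr_supp x \<union> gr_supp y" x] rho_entry_on_superset[of "gr_supp x \<union> gr_supp y" y]
    gr_supp_add[of x y]
  by (simp add: sum.distrib distrib_right)

lemma rho_entry_sum:
  "finite I \<Longrightarrow> (\<And>i. i \<in> I \<Longrightarrow> fin_supp (f i)) \<Longrightarrow>
   rho_entry \<rho> (\<Sum>i\<in>I. f i) a b = (\<Sum>i\<in>I. rho_entry \<rho> (f i) a b)"
  by (induction I rule: finite_induct) (simp_all add: rho_entry_add fin_supp_sum)

lemma rho_entry_scale: "rho_entry \<rho> (gr_scale c x) a b = of_int c * rho_entry \<rho> x a b"
proof (cases "c = 0")
  case True
  then show ?thesis by (simp add: rho_entry_def gr_scale_def gr_supp_def)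
next
  case False
  then have "gr_supp (gr_scale c x) = gr_supp x" by (auto simp: gr_supp_def gr_scale_def)
  then show ?thesis by (simp add: rho_entry_def gr_scale_def sum_distrib_left mult.assoc)
qed

lemma rho_entry_gr_of: "rho_entry \<rho> (gr_of \<gamma>) a b = \<rho> \<gamma> $$ (a, b)"
  by (simp add: rho_entry_def)

lemma rho_entry_mult:
  assumes mult: "\<And>x y. x \<in> H \<Longrightarrow> y \<in> H \<Longrightarrow> \<rho> (x \<otimes>\<^bsub>FB n\<^esub> y) = \<rho> x * \<rho> y"
    and car: "\<And>x. x \<in> H \<Longrightarrow> \<rho> x \<in> carrier_mat d d"
    and x: "in_group_ring H x" and y: "in_group_ring H y" and ab: "a < d" "b < d"
  shows "rho_entry \<rho> (gr_mult n x y) a b = (\<Sum>c<d. rho_entry \<rho> x a c * rho_entry \<rho> y c b)"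
proof -
  let ?S = "gr_supp x" and ?T = "gr_supp y"
  have f: "finite ?S" "finite ?T" and H: "?S \<subseteq> H" "?T \<subseteq> H"
    using x y by (auto simp: in_group_ring_def)
  have "rho_entry \<rho> (gr_mult n x y) a b
      = (\<Sum>\<alpha>\<in>?S. \<Sum>\<beta>\<in>?T. of_int (x \<alpha> * y \<beta>) * \<rho> (\<alpha> \<otimes>\<^bsub>FB n\<^esub> \<beta>) $$ (a, b))"
    using f by (simp add: gr_mult_eq_sum_gr_of[of ?S ?T] rho_entry_sum fin_supp_sum fin_supp_scale
        rho_entry_scale rho_entry_gr_of)
  also have "\<dots> = (\<Sum>\<alpha>\<in>?S. \<Sum>\<beta>\<in>?T. \<Sum>c<d.
                    (of_int (x \<alpha>) * \<rho> \<alpha> $$ (a, c)) * (of_int (y \<beta>) * \<rho> \<beta> $$ (c, b)))"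
  proof (intro sum.cong HOL.refl)
    fix \<alpha> \<beta> assume "\<alpha> \<in> ?S" "\<beta> \<in> ?T"
    then have "\<alpha> \<in> H" "\<beta> \<in> H" using H by auto
    then show "of_int (x \<alpha> * y \<beta>) * \<rho> (\<alpha> \<otimes>\<^bsub>FB n\<^esub> \<beta>) $$ (a, b)
        = (\<Sum>c<d. (of_int (x \<alpha>) * \<rho> \<alpha> $$ (a, c)) * (of_int (y \<beta>) * \<rho> \<beta> $$ (c, b)))"
      by (simp add: mult index_mult_mat_sum[OF car car ab] sum_distrib_left mult_ac)
  qed
  also have "\<dots> = (\<Sum>\<alpha>\<in>?S. \<Sum>c<d. \<Sum>\<beta>\<in>?T.
                    (of_int (x \<alpha>) * \<rho> \<alpha> $$ (a, c)) * (of_int (y \<beta>) * \<rho> \<beta> $$ (c, b)))"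
    by (intro sum.cong HOL.refl sum.swap)
  also have "\<dots> = (\<Sum>c<d. \<Sum>\<alpha>\<in>?S. \<Sum>\<beta>\<in>?T.
                    (of_int (x \<alpha>) * \<rho> \<alpha> $$ (a, c)) * (of_int (y \<beta>) * \<rho> \<beta> $$ (c, b)))"
    by (rule sum.swap)
  also have "\<dots> = (\<Sum>c<d. rho_entry \<rho> x a c * rho_entry \<rho> y c b)"
    by (simp add: rho_entry_def sum_product)
  finally show ?thesis .
qed

lemma index_rho_plus:
  "a < n * d \<Longrightarrow> b < n * d \<Longrightarrow>
   rho_plus n d \<rho> \<beta> $$ (a, b) = rho_entry \<rho> (phi n \<beta> (a div d) (b div d)) (a mod d) (b mod d)"
  by (cases "d = 0") (simp_all add: rho_plus_def index_rho_lin)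

lemma rho_plus_carrier: "rho_plus n d \<rho> \<beta> \<in> carrier_mat (n * d) (n * d)"
  by (simp add: rho_plus_def)

context
  fixes n d :: nat and G :: "gen word set set" and \<rho> :: "gen word set \<Rightarrow> complex mat"
  assumes G: "G \<subseteq> braid_sub n" and rep: "is_rep n (FnG n G) d \<rho>"
begin

lemma rho_plus_mult:
  assumes x: "x \<in> G" and y: "y \<in> G"
  shows "rho_plus n d \<rho> (x \<otimes>\<^bsub>FB n\<^esub> y) = rho_plus n d \<rho> x * rho_plus n d \<rho> y"
proof (rule eq_matI)
  fix a b assume "a < dim_row (rho_plus n d \<rho> x * rho_plus n d \<rho> y)"
    "b < dim_col (rho_plus n d \<rho> x * rho_plus n d \<rho> y)"
  then have ab: "a < n * d" "b < n * d" by (simp_all add: rho_plus_def)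
  then have d: "0 < d" by (cases d) auto
  have blocks: "a div d < n" "b div d < n" "a mod d < d" "b mod d < d"
    using ab d by (simp_all add: less_mult_imp_div_less)
  have wf: "gm_wf n (phi n x)" "gm_wf n (phi n y)"
    using gm_wf_phi G x y by auto
  have mult: "\<And>x y. x \<in> FnG n G \<Longrightarrow> y \<in> FnG n G \<Longrightarrow> \<rho> (x \<otimes>\<^bsub>FB n\<^esub> y) = \<rho> x * \<rho> y"
    and car: "\<And>x. x \<in> FnG n G \<Longrightarrow> \<rho> x \<in> carrier_mat d d"
    using rep by (auto simp: is_rep_def)
  let ?R = "\<lambda>\<beta> k l. rho_entry \<rho> (phi n \<beta> k l)"
  have "rho_plus n d \<rho> (x \<otimes>\<^bsub>FB n\<^esub> y) $$ (a, b)
      = rho_entry \<rho> (gm_mult n (phi n x) (phi n y) (a div d) (b div d)) (a mod d) (b mod d)"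
    using ab G x y by (simp add: index_rho_plus phi_mult subset_iff)
  also have "\<dots> = (\<Sum>m<n. rho_entry \<rho> (gr_mult n (phi n x (a div d) m) (phi n y m (b div d)))
                          (a mod d) (b mod d))"
    unfolding gm_mult_entry
    by (rule rho_entry_sum) (auto intro: fin_supp_mult in_ZFB_fin_supp gm_wfD(1)[OF wf(1)]
        gm_wfD(1)[OF wf(2)])
  also have "\<dots> = (\<Sum>m<n. \<Sum>c<d. ?R x (a div d) m (a mod d) c * ?R y m (b div d) c (b mod d))"
    using phi_in_group_ring[OF G x] phi_in_group_ring[OF G y]
    by (intro sum.cong HOL.refl rho_entry_mult[OF mult car _ _ blocks(3,4)]) auto
  also have "\<dots> = (\<Sum>e<n * d. ?R x (a div d) (e div d) (a mod d) (e mod d)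
                           * ?R y (e div d) (b div d) (e mod d) (b mod d))"
    unfolding sum_lessThan_mult_blocks using d by (intro sum.cong HOL.refl) auto
  also have "\<dots> = (\<Sum>e<n * d. rho_plus n d \<rho> x $$ (a, e) * rho_plus n d \<rho> y $$ (e, b))"
    using ab by (intro sum.cong HOL.refl) (simp add: index_rho_plus)
  also have "\<dots> = (rho_plus n d \<rho> x * rho_plus n d \<rho> y) $$ (a, b)"
    by (rule index_mult_mat_sum[symmetric, OF rho_plus_carrier rho_plus_carrier ab])
  finally show "rho_plus n d \<rho> (x \<otimes>\<^bsub>FB n\<^esub> y) $$ (a, b)
      = (rho_plus n d \<rho> x * rho_plus n d \<rho> y) $$ (a, b)" .
qed (simp_all add: rho_plus_def)

lemma rho_plus_one: "rho_plus n d \<rho> \<one>\<^bsub>FB n\<^esub> = 1\<^sub>m (n * d)"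
proof -
  interpret FB: group "FB n" by (rule group_FB)
  have one: "\<one>\<^bsub>FB n\<^esub> \<in> FnG n G"
    unfolding FnG_def by (rule generate.one)
  have car: "\<rho> \<one>\<^bsub>FB n\<^esub> \<in> carrier_mat d d" and inv: "invertible_mat (\<rho> \<one>\<^bsub>FB n\<^esub>)"
    and mult: "\<rho> (\<one>\<^bsub>FB n\<^esub> \<otimes>\<^bsub>FB n\<^esub> \<one>\<^bsub>FB n\<^esub>) = \<rho> \<one>\<^bsub>FB n\<^esub> * \<rho> \<one>\<^bsub>FB n\<^esub>"
    using rep one unfolding is_rep_def by blast+
  have "\<rho> \<one>\<^bsub>FB n\<^esub> * \<rho> \<one>\<^bsub>FB n\<^esub> = \<rho> \<one>\<^bsub>FB n\<^esub>"
    using mult[unfolded FB.l_one[OF FB.one_closed], symmetric] .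
  then have rho_one: "\<rho> \<one>\<^bsub>FB n\<^esub> = 1\<^sub>m d"
    by (rule invertible_idempotent_mat[OF car inv])
  show ?thesis
  proof (rule eq_matI)
    fix a b assume "a < dim_row (1\<^sub>m (n * d))" "b < dim_col (1\<^sub>m (n * d) :: complex mat)"
    then have ab: "a < n * d" "b < n * d" by simp_all
    then have d: "0 < d" by (cases d) auto
    have "rho_plus n d \<rho> \<one>\<^bsub>FB n\<^esub> $$ (a, b)
        = rho_entry \<rho> (gm_one n (a div d) (b div d)) (a mod d) (b mod d)"
      using ab by (simp add: index_rho_plus phi_one)
    also have "\<dots> = (if a = b then 1 else 0)"
      using ab d rho_one nat_eq_iff_div_mod_eq[of a b d]
      by (simp add: gm_one_def gr_one_def rho_entry_gr_of gr_zero_eq less_mult_imp_div_less)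
    also have "\<dots> = 1\<^sub>m (n * d) $$ (a, b)"
      using ab by simp
    finally show "rho_plus n d \<rho> \<one>\<^bsub>FB n\<^esub> $$ (a, b) = 1\<^sub>m (n * d) $$ (a, b)" .
  qed (simp_all add: rho_plus_def)
qed

end

lemma is_rep_of_mult_one:
  assumes G: "subgroup G (FB n)"
    and car: "\<And>x. x \<in> G \<Longrightarrow> R x \<in> carrier_mat N N"
    and mult: "\<And>x y. x \<in> G \<Longrightarrow> y \<in> G \<Longrightarrow> R (x \<otimes>\<^bsub>FB n\<^esub> y) = R x * R y"
    and one: "R \<one>\<^bsub>FB n\<^esub> = 1\<^sub>m N"
  shows "is_rep n G N R"
  unfolding is_rep_def
proof (intro conjI ballI)
  fix x assume x: "x \<in> G"
  interpret FB: group "FB n" by (rule group_FB)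
  have ix: "inv\<^bsub>FB n\<^esub> x \<in> G"
    by (rule subgroup.m_inv_closed[OF G x])
  have xc: "x \<in> carrier (FB n)"
    using subgroup.subset[OF G] x by blast
  have "R x * R (inv\<^bsub>FB n\<^esub> x) = 1\<^sub>m N"
    using mult[OF x ix, symmetric] xc one by simp
  moreover have "R (inv\<^bsub>FB n\<^esub> x) * R x = 1\<^sub>m N"
    using mult[OF ix x, symmetric] xc one by simp
  ultimately show "invertible_mat (R x)"
    using car[OF x] car[OF ix]
    unfolding invertible_mat_def inverts_mat_def by (intro conjI exI[of _ "R (inv\<^bsub>FB n\<^esub> x)"]) simp_all
  show "R x \<in> carrier_mat N N" by (rule car[OF x])
qed (rule mult)

theorem theorem3p1:
  fixes n d :: nat and G :: "gen word set set" and \<rho> :: "gen word set \<Rightarrow> complex mat"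
  assumes "2 \<le> n"
    and "subgroup G (FB n)" and "G \<subseteq> braid_sub n"
    and "is_rep n (FnG n G) d \<rho>"
  shows "(\<forall>\<beta>\<in>G. \<forall>k<n. \<forall>l<n. in_group_ring (FnG n G) (phi n \<beta> k l))
         \<and> is_rep n G (n * d) (rho_plus n d \<rho>)"
proof
  show "\<forall>\<beta>\<in>G. \<forall>k<n. \<forall>l<n. in_group_ring (FnG n G) (phi n \<beta> k l)"
    using phi_in_group_ring[OF assms(3)] by blast
  show "is_rep n G (n * d) (rho_plus n d \<rho>)"
    by (rule is_rep_of_mult_one[OF assms(2)])
      (simp_all add: rho_plus_carrier rho_plus_mult[OF assms(3,4)] rho_plus_one[OF assms(3,4)])
qed

end
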